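(* Let $E\subset\mathbb R^{n+1}$ be a bounded $C^2$-regular set, $\varepsilon>0$, and let $(x,y)\in\partial E\times\partial E$ be a local maximum or local minimum point of $S_{E,\varepsilon}$. Then $$B_E(x)(x-y)=2S_{E,\varepsilon}(x,y)P_{\partial E}(x)(x-y)\quad\text{and}\quad P_{\partial E}(y)\nu_E(x)=2S_{E,\varepsilon}(x,y)P_{\partial E}(y)(x-y).$$ Moreover, if $r_E>\sqrt\varepsilon$, then $$\nu_E(y)=\frac{\nu_E(x)-2S_{E,\varepsilon}(x,y)(x-y)}{\big(\nu_E(x)-2S_{E,\varepsilon}(x,y)(x-y)\big)\cdot\nu_E(y)}.$$
   Context: $\nu_E$ is the outer unit normal of $E$, $P_{\partial E}=I-\nu_E\otimes\nu_E$, and $B_E=\nabla_\tau\nu_E$ is the second fundamental form as a matrix field on $\partial E$. $S_{E,\varepsilon}(x,y)=\frac{(x-y)\cdot\nu_E(x)}{|x-y|^2+\varepsilon}$ for $(x,y)\in\partial E\times\partial E$. $r_E=\sup\{r>0:d_E\text{ is differentiable in }\{x:\mathrm{dist}(x,\partial E)<r\}\}$, $d_E$ the signed distance function of $E$. *)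

theory Defs
  imports "HOL-Analysis.Analysis"
begin

definition C2_fun :: "'a::euclidean_space set \<Rightarrow> ('a \<Rightarrow> real) \<Rightarrow> bool" where
  "C2_fun U \<phi> \<longleftrightarrow> (\<exists>g (g' :: 'a \<Rightarrow> 'a \<Rightarrow>\<^sub>L 'a).
      (\<forall>z\<in>U. (\<phi> has_derivative (\<lambda>h. g z \<bullet> h)) (at z)
             \<and> (g has_derivative blinfun_apply (g' z)) (at z))
      \<and> continuous_on U g')"

definition local_defining_fun ::
  "'a::euclidean_space set \<Rightarrow> 'a \<Rightarrow> 'a set \<Rightarrow> ('a \<Rightarrow> real) \<Rightarrow> bool" where
  "local_defining_fun E x U \<phi> \<longleftrightarrow> open U \<and> x \<in> U \<and> C2_fun U \<phi>
     \<and> (\<forall>z\<in>U. \<forall>v. (\<phi> has_derivative (\<lambda>h. v \<bullet> h)) (at z) \<longrightarrow> v \<noteq> 0)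
     \<and> E \<inter> U = {z\<in>U. \<phi> z < 0}"

definition C2_regular :: "'a::euclidean_space set \<Rightarrow> bool" where
  "C2_regular E \<longleftrightarrow> (\<forall>x\<in>frontier E. \<exists>U \<phi>. local_defining_fun E x U \<phi>)"

definition outer_normal :: "'a::euclidean_space set \<Rightarrow> 'a \<Rightarrow> 'a" where
  "outer_normal E x = (SOME n. \<exists>U \<phi> v. local_defining_fun E x U \<phi>
      \<and> (\<phi> has_derivative (\<lambda>h. v \<bullet> h)) (at x) \<and> n = v /\<^sub>R norm v)"

definition tan_proj :: "'a::euclidean_space set \<Rightarrow> 'a \<Rightarrow> 'a \<Rightarrow> 'a" where
  "tan_proj E x v = v - (v \<bullet> outer_normal E x) *\<^sub>R outer_normal E x"

text \<open>Second fundamental form B_E(x) = tangential gradient of nu_E at x, as a linear map: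
  its restriction to tangent vectors is the derivative of nu_E along dE, and
  B_E(x) = B_E(x) P_{dE}(x).\<close>
definition second_fund :: "'a::euclidean_space set \<Rightarrow> 'a \<Rightarrow> 'a \<Rightarrow> 'a" where
  "second_fund E x = (SOME L. linear L \<and> (\<forall>v. L v = L (tan_proj E x v))
      \<and> (outer_normal E has_derivative L) (at x within frontier E))"

definition S_fun :: "'a::euclidean_space set \<Rightarrow> real \<Rightarrow> 'a \<Rightarrow> 'a \<Rightarrow> real" where
  "S_fun E \<epsilon> x y = ((x - y) \<bullet> outer_normal E x) / ((norm (x - y))\<^sup>2 + \<epsilon>)"

definition signed_dist :: "'a::euclidean_space set \<Rightarrow> 'a \<Rightarrow> real" where
  "signed_dist E z = infdist z E - infdist z (- E)"

definition r_E :: "'a::euclidean_space set \<Rightarrow> real" where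
  "r_E E = Sup {r. r > 0 \<and> (\<forall>z. infdist z (frontier E) < r
                    \<longrightarrow> signed_dist E differentiable (at z))}"

definition local_max_on :: "('a::metric_space \<Rightarrow> 'a \<Rightarrow> real) \<Rightarrow> 'a set \<Rightarrow> 'a \<Rightarrow> 'a \<Rightarrow> bool" where
  "local_max_on F A x y \<longleftrightarrow> x \<in> A \<and> y \<in> A \<and> (\<exists>r>0. \<forall>x'\<in>A. \<forall>y'\<in>A.
      dist x' x < r \<and> dist y' y < r \<longrightarrow> F x' y' \<le> F x y)"

definition local_min_on :: "('a::metric_space \<Rightarrow> 'a \<Rightarrow> real) \<Rightarrow> 'a set \<Rightarrow> 'a \<Rightarrow> 'a \<Rightarrow> bool" where
  "local_min_on F A x y \<longleftrightarrow> x \<in> A \<and> y \<in> A \<and> (\<exists>r>0. \<forall>x'\<in>A. \<forall>y'\<in>A.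
      dist x' x < r \<and> dist y' y < r \<longrightarrow> F x' y' \<ge> F x y)"

end

theory Submission
  imports Defs
begin

definition tangent_vector :: "'a::real_normed_vector set \<Rightarrow> 'a \<Rightarrow> 'a \<Rightarrow> bool" where
  "tangent_vector S p \<tau> \<longleftrightarrow>
     (\<forall>\<eta>>0. \<forall>\<^sub>F t in at_right 0. \<exists>q\<in>S. norm (q - p - t *\<^sub>R \<tau>) \<le> \<eta> * t)"

lemma eventually_at_right_0_mult_less: "0 < d \<Longrightarrow> \<forall>\<^sub>F t in at_right 0. t * c < (d::real)"
proof -
  assume "0 < d"
  have "((\<lambda>t. t * c) \<longlongrightarrow> 0 * c) (at_right 0)" by (intro tendsto_intros)
  with \<open>0 < d\<close> show ?thesis using order_tendstoD(2) by fastforce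
qed

lemma tangent_vector_sample:
  assumes "tangent_vector S p \<tau>" "\<eta> > 0" "d > 0"
  obtains t q where "t > 0" "q \<in> S" "norm (q - p - t *\<^sub>R \<tau>) \<le> \<eta> * t"
    "norm (q - p) \<le> t * (norm \<tau> + \<eta>)" "t * (norm \<tau> + \<eta>) < d"
proof -
  have "\<forall>\<^sub>F t in at_right 0. t > 0 \<and> t * (norm \<tau> + \<eta>) < d
      \<and> (\<exists>q\<in>S. norm (q - p - t *\<^sub>R \<tau>) \<le> \<eta> * t)"
    using assms eventually_at_right_less[of 0] eventually_at_right_0_mult_less[of d]
    unfolding tangent_vector_def by (intro eventually_conj) auto
  then obtain t q where t: "t > 0" "t * (norm \<tau> + \<eta>) < d"
    and q: "q \<in> S" "norm (q - p - t *\<^sub>R \<tau>) \<le> \<eta> * t"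
    using eventually_happens'[OF trivial_limit_at_right_real] by blast
  have "norm (q - p) \<le> norm (t *\<^sub>R \<tau>) + norm (q - p - t *\<^sub>R \<tau>)"
    by (metis add.commute diff_add_cancel norm_triangle_ineq)
  also have "\<dots> \<le> t * (norm \<tau> + \<eta>)" using q t by (simp add: algebra_simps)
  finally show ?thesis using that t q by blast
qed

lemma tangent_vector_local_max:
  fixes f :: "'a::real_normed_vector \<Rightarrow> real"
  assumes f: "(f has_derivative f') (at p within S)" and tau: "tangent_vector S p \<tau>"
    and "\<delta> > 0" and max: "\<And>q. q \<in> S \<Longrightarrow> dist q p < \<delta> \<Longrightarrow> f q \<le> f p"
  shows "f' \<tau> \<le> 0"
proof (rule ccontr)
  define c where "c = f' \<tau>"
  assume "\<not> f' \<tau> \<le> 0"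
  then have "c > 0" by (simp add: c_def)
  interpret f': bounded_linear f' using f by (rule has_derivative_bounded_linear)
  obtain K where "K > 0" and K: "\<And>v. norm (f' v) \<le> norm v * K"
    using f'.pos_bounded by blast
  define \<eta> where "\<eta> = c / (4 * K)"
  have "\<eta> > 0" using \<open>c > 0\<close> \<open>K > 0\<close> by (simp add: \<eta>_def)
  define R where "R = norm \<tau> + \<eta>"
  have "R > 0" using \<open>\<eta> > 0\<close> by (simp add: R_def add_nonneg_pos)
  define e where "e = c / 4 / R"
  have "e > 0" using \<open>c > 0\<close> \<open>R > 0\<close> by (simp add: e_def)
  obtain d where "d > 0" and d: "\<And>y. y \<in> S \<Longrightarrow> norm (y - p) < d \<Longrightarrow>
      norm (f y - f p - f' (y - p)) \<le> e * norm (y - p)"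
    using f \<open>e > 0\<close> unfolding has_derivative_within_alt by blast
  obtain t q where "t > 0" "q \<in> S" and q: "norm (q - p - t *\<^sub>R \<tau>) \<le> \<eta> * t"
    and qp: "norm (q - p) \<le> t * R" and "t * R < min d \<delta>"
    using tangent_vector_sample[OF tau \<open>\<eta> > 0\<close>, of "min d \<delta>"] \<open>d > 0\<close> \<open>\<delta> > 0\<close>
    unfolding R_def by auto
  have "f q \<le> f p" using max[OF \<open>q \<in> S\<close>] qp \<open>t * R < min d \<delta>\<close> by (simp add: dist_norm)
  have "f' (q - p) = t * c + f' (q - p - t *\<^sub>R \<tau>)"
    by (simp add: c_def f'.diff f'.scaleR)
  moreover have "norm (f' (q - p - t *\<^sub>R \<tau>)) \<le> t * c / 4"
  proof -
    have "\<eta> * t * K = t * c / 4" using \<open>K > 0\<close> by (simp add: \<eta>_def)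
    then show ?thesis
      using K[of "q - p - t *\<^sub>R \<tau>"] mult_right_mono[OF q, of K] \<open>K > 0\<close> by linarith
  qed
  ultimately have lin: "f' (q - p) \<ge> 3 / 4 * (t * c)" unfolding real_norm_def by arith
  have "norm (f q - f p - f' (q - p)) \<le> e * norm (q - p)"
    using d[OF \<open>q \<in> S\<close>] qp \<open>t * R < min d \<delta>\<close> by simp
  also have "\<dots> \<le> e * (t * R)" using qp \<open>e > 0\<close> by (simp add: mult_left_mono)
  also have "\<dots> = t * c / 4" using \<open>R > 0\<close> unfolding e_def by (simp add: field_simps)
  finally have "f q - f p \<ge> f' (q - p) - t * c / 4" unfolding real_norm_def by arith
  moreover have "t * c > 0" using \<open>t > 0\<close> \<open>c > 0\<close> by simp
  ultimately show False using lin \<open>f q \<le> f p\<close> by linarith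
qed

lemma has_derivative_within_tangent_unique:
  fixes F :: "'a::real_normed_vector \<Rightarrow> 'b::real_inner"
  assumes L1: "(F has_derivative L1) (at p within S)" and L2: "(F has_derivative L2) (at p within S)"
    and tau: "tangent_vector S p \<tau>"
  shows "L1 \<tau> = L2 \<tau>"
proof -
  define v where "v = L1 \<tau> - L2 \<tau>"
  have "((\<lambda>q. v \<bullet> F q - v \<bullet> F q) has_derivative (\<lambda>k. v \<bullet> L1 k - v \<bullet> L2 k)) (at p within S)"
    by (intro has_derivative_diff has_derivative_inner_right L1 L2)
  from tangent_vector_local_max[OF this tau zero_less_one] have "v \<bullet> v \<le> 0"
    by (simp add: v_def inner_diff_right)
  then show ?thesis by (metis inner_gt_zero_iff not_le right_minus_eq v_def)
qed

lemma has_real_derivative_along_line: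
  fixes f :: "'a::real_normed_vector \<Rightarrow> real"
  assumes "(f has_derivative f') (at (z + \<theta> *\<^sub>R a))"
  shows "((\<lambda>t. f (z + t *\<^sub>R a)) has_real_derivative f' a) (at \<theta>)"
proof -
  have "((\<lambda>t. z + t *\<^sub>R a) has_derivative (\<lambda>t. t *\<^sub>R a)) (at \<theta>)"
    by (intro derivative_eq_intros) auto
  from has_derivative_compose[OF this assms] show ?thesis
    unfolding has_field_derivative_def
    by (rule has_derivative_eq_rhs)
      (simp add: fun_eq_iff linear_scale[OF has_derivative_linear[OF assms]])
qed

lemma linearization_difference_bound:
  assumes "linear G"
    and "norm (g y1 - g x - G (y1 - x)) \<le> e * norm (y1 - x)"
    and "norm (g y2 - g x - G (y2 - x)) \<le> e * norm (y2 - x)"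
  shows "norm (g y1 - g y2 - G (y1 - y2)) \<le> e * (norm (y1 - x) + norm (y2 - x))"
proof -
  have "g y1 - g y2 - G (y1 - y2) = (g y1 - g x - G (y1 - x)) - (g y2 - g x - G (y2 - x))"
    using linear_diff[OF assms(1), of "y1 - x" "y2 - x"] by (simp add: algebra_simps)
  then have "norm (g y1 - g y2 - G (y1 - y2))
      \<le> norm (g y1 - g x - G (y1 - x)) + norm (g y2 - g x - G (y2 - x))"
    by (metis norm_triangle_ineq4)
  also have "\<dots> \<le> e * norm (y1 - x) + e * norm (y2 - x)" using assms(2,3) by (rule add_mono)
  finally show ?thesis by (simp add: distrib_left)
qed

lemma second_difference_estimate:
  fixes \<phi> :: "'a::real_inner \<Rightarrow> real"
  assumes grad: "\<forall>z\<in>ball x d. (\<phi> has_derivative (\<lambda>h. g z \<bullet> h)) (at z)"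
    and G: "linear G" "\<forall>y\<in>ball x d. norm (g y - g x - G (y - x)) \<le> e * norm (y - x)"
    and e0: "e \<ge> 0" and s0: "s > 0" and sd: "s * (norm a + norm b) < d"
  shows "\<bar>\<phi> (x + s *\<^sub>R a + s *\<^sub>R b) - \<phi> (x + s *\<^sub>R a) - \<phi> (x + s *\<^sub>R b) + \<phi> x
           - s * s * (a \<bullet> G b)\<bar> \<le> s * (s * e * norm a * (2 * norm a + norm b))"
proof -
  define B where "B = s * e * norm a * (2 * norm a + norm b)"
  define \<psi> where "\<psi> \<theta> = \<phi> (x + s *\<^sub>R b + \<theta> *\<^sub>R a) - \<phi> (x + \<theta> *\<^sub>R a) - \<theta> * (s * (a \<bullet> G b))" for \<theta>
  define c where "c \<theta> = (g (x + s *\<^sub>R b + \<theta> *\<^sub>R a) - g (x + \<theta> *\<^sub>R a) - s *\<^sub>R G b) \<bullet> a" for \<theta>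
  have near: "norm (\<theta> *\<^sub>R a + \<sigma> *\<^sub>R b) \<le> \<theta> * norm a + \<sigma> * norm b"
    "\<theta> * norm a + \<sigma> * norm b < d" if "\<theta> \<in> {0..s}" "\<sigma> \<in> {0..s}" for \<theta> \<sigma>
  proof -
    show "norm (\<theta> *\<^sub>R a + \<sigma> *\<^sub>R b) \<le> \<theta> * norm a + \<sigma> * norm b"
      using that norm_triangle_ineq[of "\<theta> *\<^sub>R a" "\<sigma> *\<^sub>R b"] by simp
    have "\<theta> * norm a + \<sigma> * norm b \<le> s * norm a + s * norm b"
      using that by (intro add_mono mult_right_mono) auto
    then show "\<theta> * norm a + \<sigma> * norm b < d" using sd by (simp add: algebra_simps)
  qed
  have in_ball: "x + s *\<^sub>R b + \<theta> *\<^sub>R a \<in> ball x d" "x + \<theta> *\<^sub>R a \<in> ball x d"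
    if "\<theta> \<in> {0..s}" for \<theta>
    using near[OF that, of s] near[OF that, of 0] s0 that
    by (auto simp: dist_norm norm_minus_commute add.commute add.left_commute)
  have "(\<psi> has_derivative (\<lambda>h. c \<theta> * h)) (at \<theta> within {0..s})" if "\<theta> \<in> {0..s}" for \<theta>
  proof -
    have "((\<lambda>t. \<phi> (x + s *\<^sub>R b + t *\<^sub>R a)) has_real_derivative g (x + s *\<^sub>R b + \<theta> *\<^sub>R a) \<bullet> a) (at \<theta>)"
      using grad in_ball[OF that] by (intro has_real_derivative_along_line) auto
    moreover have "((\<lambda>t. \<phi> (x + t *\<^sub>R a)) has_real_derivative g (x + \<theta> *\<^sub>R a) \<bullet> a) (at \<theta>)"
      using grad in_ball[OF that] by (intro has_real_derivative_along_line) auto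
    moreover have "((\<lambda>t. t * (s * (a \<bullet> G b))) has_real_derivative s * (a \<bullet> G b)) (at \<theta>)"
      by (auto intro!: derivative_eq_intros)
    ultimately have "(\<psi> has_real_derivative
        g (x + s *\<^sub>R b + \<theta> *\<^sub>R a) \<bullet> a - g (x + \<theta> *\<^sub>R a) \<bullet> a - s * (a \<bullet> G b)) (at \<theta>)"
      unfolding \<psi>_def by (intro DERIV_diff)
    moreover have "g (x + s *\<^sub>R b + \<theta> *\<^sub>R a) \<bullet> a - g (x + \<theta> *\<^sub>R a) \<bullet> a - s * (a \<bullet> G b) = c \<theta>"
      by (simp add: c_def inner_diff_left inner_commute[of a])
    ultimately show ?thesis
      unfolding has_field_derivative_def[symmetric] by (metis has_field_derivative_at_within)
  qed
  moreover have "onorm (\<lambda>h. c \<theta> * h) \<le> B" if "\<theta> \<in> {0..s}" for \<theta>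
  proof (rule onorm_le)
    fix h :: real
    have "\<bar>c \<theta>\<bar> \<le> B"
    proof -
      define y1 where "y1 = x + s *\<^sub>R b + \<theta> *\<^sub>R a"
      define y2 where "y2 = x + \<theta> *\<^sub>R a"
      have y1: "norm (y1 - x) \<le> \<theta> * norm a + s * norm b" and y2: "norm (y2 - x) = \<theta> * norm a"
        using near[OF that, of s] s0 that by (simp_all add: y1_def y2_def algebra_simps)
      have "y1 \<in> ball x d" "y2 \<in> ball x d" using in_ball[OF that] by (simp_all add: y1_def y2_def)
      then have "norm (g y1 - g y2 - G (y1 - y2)) \<le> e * (norm (y1 - x) + norm (y2 - x))"
        using G(2) by (intro linearization_difference_bound[OF G(1)]) blast+
      also have "\<dots> \<le> e * (s * (2 * norm a + norm b))"
      proof (rule mult_left_mono[OF _ e0])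
        have "\<theta> * norm a \<le> s * norm a" using that by (simp add: mult_right_mono)
        then show "norm (y1 - x) + norm (y2 - x) \<le> s * (2 * norm a + norm b)"
          using y1 y2 by (simp add: algebra_simps)
      qed
      finally have "norm (g y1 - g y2 - s *\<^sub>R G b) \<le> e * (s * (2 * norm a + norm b))"
        by (simp add: y1_def y2_def linear_scale[OF G(1)])
      then have "norm (g y1 - g y2 - s *\<^sub>R G b) * norm a \<le> e * (s * (2 * norm a + norm b)) * norm a"
        by (simp add: mult_right_mono)
      moreover have "\<bar>c \<theta>\<bar> \<le> norm (g y1 - g y2 - s *\<^sub>R G b) * norm a"
        unfolding c_def y1_def y2_def by (rule Cauchy_Schwarz_ineq2)
      ultimately show ?thesis by (simp add: B_def algebra_simps)
    qed
    then show "norm (c \<theta> * h) \<le> B * norm h"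
      by (simp add: abs_mult mult_right_mono)
  qed
  ultimately have "norm (\<psi> s - \<psi> 0) \<le> B * norm (s - 0)"
    using s0 by (intro differentiable_bound[where f'="\<lambda>\<theta> h. c \<theta> * h" and S="{0..s}"]) auto
  moreover have "\<psi> s - \<psi> 0 = \<phi> (x + s *\<^sub>R a + s *\<^sub>R b) - \<phi> (x + s *\<^sub>R a) - \<phi> (x + s *\<^sub>R b) + \<phi> x
      - s * s * (a \<bullet> G b)"
    by (simp add: \<psi>_def algebra_simps)
  ultimately show ?thesis using s0 by (simp add: B_def mult.commute)
qed

lemma gradient_derivative_symmetric:
  fixes \<phi> :: "'a::real_inner \<Rightarrow> real"
  assumes "open U" "x \<in> U" and grad: "\<And>z. z \<in> U \<Longrightarrow> (\<phi> has_derivative (\<lambda>h. g z \<bullet> h)) (at z)"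
    and G: "(g has_derivative G) (at x)"
  shows "a \<bullet> G b = b \<bullet> G a"
proof -
  define K where "K = norm a * (2 * norm a + norm b) + norm b * (2 * norm b + norm a)"
  have lin: "linear G" using G by (simp add: has_derivative_bounded_linear bounded_linear.linear)
  obtain d0 where "d0 > 0" "ball x d0 \<subseteq> U" using assms(1,2) openE by blast
  have bound: "\<bar>a \<bullet> G b - b \<bullet> G a\<bar> \<le> e * K" if e0: "e > 0" for e
  proof -
    obtain d1 where "d1 > 0" and d1: "\<And>y. norm (y - x) < d1 \<Longrightarrow> norm (g y - g x - G (y - x)) \<le> e * norm (y - x)"
      using G e0 unfolding has_derivative_at_alt by blast
    define d where "d = min d0 d1"
    define s where "s = d / (2 * (norm a + norm b + 1))"
    have d: "d > 0" "ball x d \<subseteq> U"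
      using \<open>d0 > 0\<close> \<open>d1 > 0\<close> \<open>ball x d0 \<subseteq> U\<close> by (auto simp: d_def)
    have s0: "s > 0" using d by (simp add: s_def add_nonneg_pos)
    have "norm a + norm b + 1 > 0" by (simp add: add_nonneg_pos)
    then have "s * (norm a + norm b + 1) = d / 2" unfolding s_def by (simp add: field_simps)
    then have sd: "s * (norm a + norm b) < d" "s * (norm b + norm a) < d"
      using s0 d by (simp_all add: algebra_simps)
    have grad': "\<forall>z\<in>ball x d. (\<phi> has_derivative (\<lambda>h. g z \<bullet> h)) (at z)"
      using grad d(2) by blast
    have G': "\<forall>y\<in>ball x d. norm (g y - g x - G (y - x)) \<le> e * norm (y - x)"
      using d1 by (simp add: d_def dist_norm norm_minus_commute)
    note est = second_difference_estimate[OF grad' lin G' less_imp_le[OF e0] s0]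
    have swap: "x + s *\<^sub>R b + s *\<^sub>R a = x + s *\<^sub>R a + s *\<^sub>R b" by (simp add: algebra_simps)
    have "s * (s * e * K) = s * (s * e * norm a * (2 * norm a + norm b))
        + s * (s * e * norm b * (2 * norm b + norm a))"
      by (simp add: K_def algebra_simps)
    then have "\<bar>s * s * (a \<bullet> G b) - s * s * (b \<bullet> G a)\<bar> \<le> s * (s * e * K)"
      using est[OF sd(1)] est[OF sd(2)] unfolding swap abs_le_iff by linarith
    then show ?thesis using s0 by (simp add: abs_mult right_diff_distrib[symmetric])
  qed
  have "\<bar>a \<bullet> G b - b \<bullet> G a\<bar> \<le> 0 + e" if "e > 0" for e
  proof -
    have K0: "K \<ge> 0" by (simp add: K_def)
    have "\<bar>a \<bullet> G b - b \<bullet> G a\<bar> \<le> e / (K + 1) * K" using bound[of "e / (K + 1)"] that K0 by simp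
    also have "\<dots> \<le> e" using that K0 by (simp add: field_simps)
    finally show ?thesis by simp
  qed
  then have "\<bar>a \<bullet> G b - b \<bullet> G a\<bar> \<le> 0" by (rule field_le_epsilon)
  then show ?thesis by simp
qed

lemma infdist_closure: "infdist x (closure A) = infdist x A"
  by (simp add: infdist_eq_setdist)

lemma le_infdistI:
  assumes "A \<noteq> {}" "\<And>a. a \<in> A \<Longrightarrow> b \<le> dist x a"
  shows "b \<le> infdist x A"
  unfolding infdist_notempty[OF assms(1)] by (rule cINF_greatest) (use assms in auto)

lemma infdist_ge_outside_ball:
  assumes "ball c t \<inter> A = {}" "A \<noteq> {}"
  shows "t - dist y c \<le> infdist y A"
proof (rule le_infdistI[OF assms(2)])
  fix a assume "a \<in> A"
  then have "a \<notin> ball c t" using assms(1) by auto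
  then have "t \<le> dist c a" by simp
  then show "t - dist y c \<le> dist y a" using dist_triangle[of c a y] by (simp add: dist_commute)
qed

lemma infdist_le_inside_ball:
  fixes c y :: "'a::real_normed_vector"
  assumes "ball c t \<subseteq> A" "0 < t" "t \<le> dist y c"
  shows "infdist y A \<le> dist y c - t"
proof -
  define a where "a = c + (t / dist y c) *\<^sub>R (y - c)"
  have d: "dist y c > 0" using assms(2,3) by linarith
  have "a - c = (t / dist y c) *\<^sub>R (y - c)" by (simp add: a_def)
  then have "dist a c = t / dist y c * dist y c" using assms(2) by (simp add: dist_norm)
  then have "dist a c = t" using d by simp
  have "y - a = (1 - t / dist y c) *\<^sub>R (y - c)" by (simp add: a_def algebra_simps)
  moreover have "0 \<le> 1 - t / dist y c" using d assms(3) by simp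
  ultimately have "dist y a = (1 - t / dist y c) * dist y c" by (simp add: dist_norm)
  also have "\<dots> = dist y c - t" using d by (simp add: field_simps)
  finally have "dist y a = dist y c - t" .
  moreover from \<open>dist a c = t\<close> have "dist c a = t" by (simp add: dist_commute)
  then have "a \<in> cball c t" by simp
  then have "a \<in> closure A" using closure_mono[OF assms(1)] closure_ball[OF assms(2)] by blast
  then show ?thesis
    using infdist_le[of a "closure A" y] \<open>dist y a = dist y c - t\<close> by (simp add: infdist_closure)
qed

lemma infdist_diff_le_ball:
  fixes c y :: "'a::real_normed_vector"
  assumes "ball c t \<subseteq> A" "ball c t \<inter> B = {}" "B \<noteq> {}" "0 < t"
  shows "infdist y A - infdist y B \<le> dist y c - t"
proof (cases "dist y c < t")
  case True
  then have "y \<in> A" using assms(1) by (auto simp: dist_commute)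
  then show ?thesis using infdist_ge_outside_ball[OF assms(2,3), of y] by simp
next
  case False
  then have "infdist y A \<le> dist y c - t" by (intro infdist_le_inside_ball[OF assms(1,4)]) simp
  then show ?thesis using infdist_nonneg[of y B] by simp
qed

lemma has_derivative_dist_right:
  fixes p z :: "'a::real_inner"
  assumes "z \<noteq> p"
  shows "((\<lambda>y. dist y p) has_derivative (\<lambda>k. sgn (z - p) \<bullet> k)) (at z)"
proof -
  have "z - p \<noteq> 0" using assms by simp
  from has_derivative_compose[OF has_derivative_diff[OF has_derivative_ident has_derivative_const]
      has_derivative_norm[OF this]]
  show ?thesis by (simp add: dist_norm inner_commute)
qed

lemma has_derivative_squeeze:
  fixes f l u :: "'a::real_normed_vector \<Rightarrow> real"
  assumes lf: "\<And>y. l y \<le> f y" and fu: "\<And>y. f y \<le> u y" and eq: "l z = u z"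
    and l: "(l has_derivative L) (at z)" and u: "(u has_derivative L) (at z)"
  shows "(f has_derivative L) (at z)"
  unfolding has_derivative_at_alt
proof (intro conjI allI impI)
  show "bounded_linear L" using l by (rule has_derivative_bounded_linear)
  fix e :: real assume "e > 0"
  obtain d1 where "d1 > 0"
    and d1: "\<And>y. norm (y - z) < d1 \<Longrightarrow> norm (l y - l z - L (y - z)) \<le> e * norm (y - z)"
    using l \<open>e > 0\<close> unfolding has_derivative_at_alt by blast
  obtain d2 where "d2 > 0"
    and d2: "\<And>y. norm (y - z) < d2 \<Longrightarrow> norm (u y - u z - L (y - z)) \<le> e * norm (y - z)"
    using u \<open>e > 0\<close> unfolding has_derivative_at_alt by blast
  have fz: "f z = l z" "f z = u z" using lf[of z] fu[of z] eq by auto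
  show "\<exists>d>0. \<forall>y. norm (y - z) < d \<longrightarrow> norm (f y - f z - L (y - z)) \<le> e * norm (y - z)"
  proof (intro exI[of _ "min d1 d2"] conjI allI impI)
    show "min d1 d2 > 0" using \<open>d1 > 0\<close> \<open>d2 > 0\<close> by simp
    fix y assume "norm (y - z) < min d1 d2"
    then show "norm (f y - f z - L (y - z)) \<le> e * norm (y - z)"
      using d1[of y] d2[of y] lf[of y] fu[of y] fz by (simp add: abs_le_iff)
  qed
qed

lemma infdist_has_derivative_exterior_ball:
  fixes C :: "'a::euclidean_space set"
  assumes p: "p \<in> C" and zp: "z - p = D *\<^sub>R u" and u: "norm u = 1" and D: "0 < D" "D < t"
    and ball: "ball (p + t *\<^sub>R u) t \<inter> C = {}"
  shows "((\<lambda>y. infdist y C) has_derivative (\<lambda>k. u \<bullet> k)) (at z)"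
proof -
  define c where "c = p + t *\<^sub>R u"
  have zc: "z - c = - ((t - D) *\<^sub>R u)" using zp by (simp add: c_def algebra_simps)
  have lower: "t - dist y c \<le> infdist y C" for y
    using infdist_ge_outside_ball[OF ball[folded c_def]] p by blast
  have upper: "infdist y C \<le> dist y p" for y using infdist_le[OF p] .
  have "z \<noteq> c" "z \<noteq> p" using zc zp u D by auto
  have "t - dist z c = dist z p" using zc zp u D by (simp add: dist_norm)
  moreover have "((\<lambda>y. t - dist y c) has_derivative (\<lambda>k. u \<bullet> k)) (at z)"
    using has_derivative_diff[OF has_derivative_const has_derivative_dist_right[OF \<open>z \<noteq> c\<close>], of t] zc u D
    by (auto simp: sgn_minus sgn_scaleR sgn_div_norm)
  moreover have "((\<lambda>y. dist y p) has_derivative (\<lambda>k. u \<bullet> k)) (at z)"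
    using has_derivative_dist_right[OF \<open>z \<noteq> p\<close>] zp u D by (auto simp: sgn_scaleR sgn_div_norm)
  ultimately show ?thesis using lower upper by (rule has_derivative_squeeze[rotated 2])
qed

lemma infdist_has_derivative_two_balls:
  fixes C :: "'a::euclidean_space set"
  assumes "p \<in> C" "z \<notin> C" "z - p = \<mu> *\<^sub>R u" "norm u = 1" "\<bar>\<mu>\<bar> < t"
    and "ball (p + t *\<^sub>R u) t \<inter> C = {}" "ball (p - t *\<^sub>R u) t \<subseteq> C"
  shows "((\<lambda>y. infdist y C) has_derivative (\<lambda>k. u \<bullet> k)) (at z)"
proof -
  have "\<mu> > 0"
  proof (rule ccontr)
    assume "\<not> \<mu> > 0"
    moreover have "\<mu> \<noteq> 0" using assms(1-3) by auto
    ultimately have "dist z (p - t *\<^sub>R u) < t"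
      using assms(3-5) by (simp add: dist_norm algebra_simps flip: scaleR_add_left)
    then show False using assms(2,7) by (auto simp: dist_commute)
  qed
  then show ?thesis using infdist_has_derivative_exterior_ball assms by auto
qed

lemma signed_dist_has_derivative_two_balls:
  fixes E :: "'a::euclidean_space set"
  assumes n: "norm n = 1" and t: "t > 0"
    and inside: "ball (z - t *\<^sub>R n) t \<subseteq> E" and outside: "ball (z + t *\<^sub>R n) t \<inter> E = {}"
  shows "(signed_dist E has_derivative (\<lambda>k. n \<bullet> k)) (at z)"
proof -
  define c1 where "c1 = z - t *\<^sub>R n"
  define c2 where "c2 = z + t *\<^sub>R n"
  have "c1 \<in> E" using inside t by (auto simp: c1_def)
  have "c2 \<notin> E" using outside t unfolding c2_def by (metis centre_in_ball disjoint_iff)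
  have lower: "t - dist y c2 \<le> signed_dist E y" for y
    using infdist_diff_le_ball[of c2 t "- E" E y] outside t \<open>c1 \<in> E\<close>
    by (force simp: signed_dist_def c2_def)
  have upper: "signed_dist E y \<le> dist y c1 - t" for y
    using infdist_diff_le_ball[of c1 t E "- E" y] inside t \<open>c2 \<notin> E\<close>
    by (force simp: signed_dist_def c1_def)
  have "z \<noteq> c1" "z \<noteq> c2" using n t by (auto simp: c1_def c2_def)
  have "t - dist z c2 = dist z c1 - t" using n t by (simp add: c1_def c2_def dist_norm)
  moreover have "((\<lambda>y. t - dist y c2) has_derivative (\<lambda>k. n \<bullet> k)) (at z)"
    using has_derivative_diff[OF has_derivative_const has_derivative_dist_right[OF \<open>z \<noteq> c2\<close>], of t] n t
    by (auto simp: c2_def sgn_minus sgn_scaleR sgn_div_norm)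
  moreover have "((\<lambda>y. dist y c1 - t) has_derivative (\<lambda>k. n \<bullet> k)) (at z)"
    using has_derivative_diff[OF has_derivative_dist_right[OF \<open>z \<noteq> c1\<close>] has_derivative_const, of t] n t
    by (auto simp: c1_def sgn_scaleR sgn_div_norm)
  ultimately show ?thesis using lower upper by (rule has_derivative_squeeze[rotated 2])
qed

lemma nearest_point_in_frontier:
  fixes C :: "'a::real_normed_vector set"
  assumes z: "z \<notin> C" and p: "p \<in> C" and near: "dist z p = infdist z C"
  shows "p \<in> frontier C"
proof -
  have "((\<lambda>\<theta>. p + \<theta> *\<^sub>R (z - p)) \<longlongrightarrow> p + 0 *\<^sub>R (z - p)) (at_right 0)"
    by (intro tendsto_intros)
  moreover have "\<forall>\<^sub>F \<theta> in at_right 0. p + \<theta> *\<^sub>R (z - p) \<in> closure (- C)"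
  proof -
    have "p + \<theta> *\<^sub>R (z - p) \<notin> C" if "0 < \<theta>" "\<theta> < 1" for \<theta>
    proof
      assume "p + \<theta> *\<^sub>R (z - p) \<in> C"
      from infdist_le[OF this, of z] near
      have "dist z p \<le> dist z (p + \<theta> *\<^sub>R (z - p))" by linarith
      also have "\<dots> = norm ((1 - \<theta>) *\<^sub>R (z - p))" by (simp add: dist_norm algebra_simps)
      also have "\<dots> = (1 - \<theta>) * dist z p" using that by (simp add: dist_norm)
      finally have "\<theta> * dist z p \<le> 0" by (simp add: algebra_simps)
      moreover have "dist z p > 0" using z p by auto
      ultimately show False using mult_pos_pos[OF \<open>0 < \<theta>\<close>, of "dist z p"] by linarith
    qed
    then show ?thesis unfolding eventually_at_right_field
      by (intro exI[of _ 1]) (auto intro: closure_subset[THEN subsetD])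
  qed
  ultimately have "p \<in> closure (- C)" by (auto intro: Lim_in_closed_set)
  then show ?thesis using p closure_subset by (auto simp: frontier_closures)
qed

lemma infdist_has_derivative_at_nearest:
  fixes C :: "'a::euclidean_space set"
  assumes D': "((\<lambda>y. infdist y C) has_derivative D') (at w)"
    and p: "p \<in> C" "dist w p = infdist w C" and "w \<noteq> p"
  shows "D' = (\<lambda>k. sgn (w - p) \<bullet> k)"
proof -
  have "((\<lambda>y. dist y p - infdist y C) has_derivative (\<lambda>k. sgn (w - p) \<bullet> k - D' k)) (at w)"
    by (rule has_derivative_diff[OF has_derivative_dist_right[OF \<open>w \<noteq> p\<close>] D'])
  moreover have "\<forall>\<^sub>F y in at w. dist w p - infdist w C \<le> dist y p - infdist y C"
    using p infdist_le[OF p(1)] by (auto intro!: always_eventually)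
  ultimately have "(\<lambda>k. sgn (w - p) \<bullet> k - D' k) = (\<lambda>k. 0)"
    by (rule has_derivative_local_min)
  then show ?thesis by (auto simp: fun_eq_iff dest: fun_cong)
qed

lemma nearest_point_unique:
  fixes C :: "'a::euclidean_space set"
  assumes "(\<lambda>y. infdist y C) differentiable (at w)" "w \<notin> C"
    and "p \<in> C" "dist w p = infdist w C" and "q \<in> C" "dist w q = infdist w C"
  shows "p = q"
proof -
  obtain D' where D': "((\<lambda>y. infdist y C) has_derivative D') (at w)"
    using assms(1) unfolding differentiable_def by blast
  have "w \<noteq> p" "w \<noteq> q" using assms by auto
  then have eq: "(\<lambda>k. sgn (w - p) \<bullet> k) = (\<lambda>k. sgn (w - q) \<bullet> k)"
    using infdist_has_derivative_at_nearest[OF D' assms(3,4)]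
      infdist_has_derivative_at_nearest[OF D' assms(5,6)] by simp
  have "sgn (w - p) = sgn (w - q)" by (rule euclidean_eqI) (use fun_cong[OF eq] in simp)
  moreover have "norm (w - p) = norm (w - q)" using assms(4,6) by (simp add: dist_norm)
  moreover have "w - p = norm (w - p) *\<^sub>R sgn (w - p)" "w - q = norm (w - q) *\<^sub>R sgn (w - q)"
    using \<open>w \<noteq> p\<close> \<open>w \<noteq> q\<close> by (simp_all add: sgn_div_norm)
  ultimately show ?thesis by (metis diff_left_imp_eq)
qed

lemma has_derivative_max_on_cball:
  fixes f :: "'a::real_inner \<Rightarrow> real"
  assumes f: "(f has_derivative (\<lambda>k. e \<bullet> k)) (at w)" and e: "norm e = 1"
    and w: "w \<in> cball c h" and max: "\<And>y. y \<in> cball c h \<Longrightarrow> f y \<le> f w"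
  shows "w = c + h *\<^sub>R e"
proof -
  define k where "k = c + h *\<^sub>R e - w"
  have "h \<ge> 0" using w by (auto intro: order_trans[OF zero_le_dist])
  then have "c + h *\<^sub>R e \<in> cball c h" using e by (simp add: dist_norm)
  then have seg: "w + s *\<^sub>R k \<in> cball c h" if "0 \<le> s" "s \<le> 1" for s
    using convex_cball[of c h, unfolded convex_alt] w that
    by (force simp: k_def algebra_simps)
  have "e \<bullet> k \<le> 0"
  proof (rule ccontr)
    assume "\<not> e \<bullet> k \<le> 0"
    have "((\<lambda>s. f (w + s *\<^sub>R k)) has_real_derivative e \<bullet> k) (at 0)"
      using has_real_derivative_along_line[of f _ w 0 k] f by simp
    from DERIV_pos_inc_right[OF this] \<open>\<not> e \<bullet> k \<le> 0\<close>
    obtain d where "d > 0" and d: "\<forall>s>0. s < d \<longrightarrow> f (w + 0 *\<^sub>R k) < f (w + (0 + s) *\<^sub>R k)"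
      by auto
    have "f (w + min (d / 2) 1 *\<^sub>R k) \<le> f w" using seg \<open>d > 0\<close> max by simp
    moreover have "f w < f (w + min (d / 2) 1 *\<^sub>R k)" using d \<open>d > 0\<close> by simp
    ultimately show False by simp
  qed
  then have "h \<le> e \<bullet> (w - c)" using e by (simp add: k_def inner_diff_right inner_add_right dot_square_norm)
  moreover have "e \<bullet> (w - c) \<le> h"
    using Cauchy_Schwarz_ineq2[of e "w - c"] e w by (simp add: dist_norm norm_minus_commute)
  ultimately have "e \<bullet> (w - c) = h" by linarith
  then have "(w - c) \<bullet> (h *\<^sub>R e) = h\<^sup>2" by (simp add: inner_commute power2_eq_square)
  moreover have "norm (h *\<^sub>R e) = h" using e \<open>h \<ge> 0\<close> by simp
  ultimately have "(norm (w - c - h *\<^sub>R e))\<^sup>2 = (norm (w - c))\<^sup>2 - h\<^sup>2"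
    using dot_norm_neg[of "w - c" "h *\<^sub>R e"] by simp
  moreover have "(norm (w - c))\<^sup>2 \<le> h\<^sup>2"
    using w by (intro power_mono) (simp_all add: dist_norm norm_minus_commute)
  ultimately have "(norm (w - c - h *\<^sub>R e))\<^sup>2 = 0"
    using zero_le_power2[of "norm (w - c - h *\<^sub>R e)"] by linarith
  then show ?thesis by (simp add: algebra_simps)
qed

lemma infdist_grows_along_nearest_direction:
  fixes C :: "'a::euclidean_space set"
  assumes C: "closed C" and x: "x \<in> C" and c: "c \<notin> C" "dist c x = infdist c C"
    and h: "0 < h" "h < infdist c C"
    and diff: "\<And>w. w \<in> cball c h \<Longrightarrow> w \<notin> C \<Longrightarrow> (\<lambda>y. infdist y C) differentiable (at w)"
  shows "infdist (c + h *\<^sub>R sgn (c - x)) C = infdist c C + h"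
proof -
  define D where "D y = infdist y C" for y
  have "continuous_on (cball c h) D" unfolding D_def by (intro continuous_intros)
  then obtain w where w: "w \<in> cball c h" and wmax: "\<And>y. y \<in> cball c h \<Longrightarrow> D y \<le> D w"
    using continuous_attains_sup[OF compact_cball, of c h D] h by auto
  have "D c \<le> D w" using wmax h by simp
  then have "w \<notin> C" using h by (auto simp: D_def)
  obtain D' where D': "(D has_derivative D') (at w)"
    using diff[OF w \<open>w \<notin> C\<close>] unfolding differentiable_def D_def by blast
  obtain p where p: "p \<in> C" "D w = dist w p"
    using infdist_attains_inf[OF C] x unfolding D_def by blast
  have "w \<noteq> p" using \<open>w \<notin> C\<close> p by auto
  define e where "e = sgn (w - p)"
  have e: "norm e = 1" "w - p = D w *\<^sub>R e"
    using \<open>w \<noteq> p\<close> p by (simp_all add: e_def dist_norm sgn_div_norm)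
  have "D' = (\<lambda>k. e \<bullet> k)"
    using infdist_has_derivative_at_nearest[of C D' w p] D' p \<open>w \<noteq> p\<close>
    by (simp add: D_def[abs_def] e_def)
  with D' have "(D has_derivative (\<lambda>k. e \<bullet> k)) (at w)" by simp
  then have "w = c + h *\<^sub>R e" using e(1) w wmax by (rule has_derivative_max_on_cball)
  then have cp: "c - p = (D w - h) *\<^sub>R e" using e by (simp add: algebra_simps)
  have "D w - h > 0" using \<open>D c \<le> D w\<close> h by (simp add: D_def)
  then have "dist c p = D w - h" using cp e by (simp add: dist_norm)
  moreover have "D w \<le> D c + h"
    using infdist_triangle[of w C c] \<open>w = c + h *\<^sub>R e\<close> e h by (simp add: D_def dist_norm)
  moreover have "D c \<le> dist c p" using infdist_le[OF p(1)] by (simp add: D_def)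
  ultimately have "dist c p = D c" "D w = D c + h" by linarith+
  moreover have "(\<lambda>y. infdist y C) differentiable (at c)" using diff[of c] c(1) h by simp
  ultimately have "p = x" using nearest_point_unique[OF _ c(1) p(1) _ x c(2)] by (simp add: D_def)
  then have "sgn (c - x) = e" using cp \<open>D w - h > 0\<close> e by (simp add: sgn_scaleR sgn_div_norm)
  then show ?thesis using \<open>w = c + h *\<^sub>R e\<close> \<open>D w = D c + h\<close> by (simp add: D_def)
qed

lemma ray_last_touching_point:
  fixes C :: "'a::euclidean_space set"
  assumes x: "x \<in> C" and u: "norm u = 1" and l: "0 < l" and y: "x + l *\<^sub>R u \<in> C"
    and ball: "t0 > 0" "ball (x + t0 *\<^sub>R u) t0 \<inter> C = {}"
  obtains T where "0 < T" "T \<le> l / 2" "infdist (x + T *\<^sub>R u) C = T"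
    "\<And>t. T < t \<Longrightarrow> t \<le> l \<Longrightarrow> infdist (x + t *\<^sub>R u) C < t"
proof -
  define D where "D t = infdist (x + t *\<^sub>R u) C" for t
  have D_le: "D t \<le> t" "D t \<le> l - t" if "0 \<le> t" "t \<le> l" for t
    using infdist_le[OF x, of "x + t *\<^sub>R u"] infdist_le[OF y, of "x + t *\<^sub>R u"] u that
    by (simp_all add: D_def dist_norm flip: scaleR_diff_left)
  define A where "A = {t \<in> {0..l}. t \<le> D t}"
  have "closed A"
  proof -
    have "continuous_on UNIV D" unfolding D_def by (intro continuous_intros)
    then have "closed {t. t \<le> D t}" by (intro closed_Collect_le continuous_intros)
    moreover have "A = {0..l} \<inter> {t. t \<le> D t}" by (auto simp: A_def)
    ultimately show ?thesis by auto
  qed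
  moreover have "0 \<in> A" using l by (simp add: A_def D_def infdist_nonneg)
  moreover have "bdd_above A" by (rule bdd_aboveI[of _ l]) (auto simp: A_def)
  ultimately have "Sup A \<in> A" and T_max: "\<And>t. t \<in> A \<Longrightarrow> t \<le> Sup A"
    using closed_contains_Sup cSup_upper by blast+
  define T where "T = Sup A"
  have "min t0 l \<in> A"
  proof -
    have "t0 - dist (x + min t0 l *\<^sub>R u) (x + t0 *\<^sub>R u) \<le> D (min t0 l)"
      using infdist_ge_outside_ball[OF ball(2)] x unfolding D_def by blast
    moreover have "dist (x + min t0 l *\<^sub>R u) (x + t0 *\<^sub>R u) = t0 - min t0 l"
      using u ball(1) l by (simp add: dist_norm flip: scaleR_diff_left)
    ultimately have "min t0 l \<le> D (min t0 l)" by linarith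
    then show ?thesis using ball(1) l by (simp add: A_def)
  qed
  moreover have "0 < min t0 l" using ball(1) l by simp
  ultimately have "0 < T" using T_max unfolding T_def by fastforce
  moreover have "T \<in> A" using \<open>Sup A \<in> A\<close> by (simp add: T_def)
  then have "D T = T" "T \<le> l / 2" using D_le[of T] by (auto simp: A_def)
  moreover have "D t < t" if "T < t" "t \<le> l" for t
    using T_max[of t] that \<open>0 < T\<close> by (force simp: A_def T_def)
  ultimately show ?thesis using that by (simp add: D_def)
qed

lemma exterior_ray_avoids_closed_set:
  fixes C :: "'a::euclidean_space set"
  assumes C: "closed C" and x: "x \<in> C" and u: "norm u = 1" and l: "0 < l" "l < r"
    and ball: "t0 > 0" "ball (x + t0 *\<^sub>R u) t0 \<inter> C = {}"
    and diff: "\<And>w. w \<notin> C \<Longrightarrow> dist w x < r \<Longrightarrow> (\<lambda>y. infdist y C) differentiable (at w)"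
  shows "x + l *\<^sub>R u \<notin> C"
proof
  assume y: "x + l *\<^sub>R u \<in> C"
  obtain T where "0 < T" "T \<le> l / 2" and DT: "infdist (x + T *\<^sub>R u) C = T"
    and beyond: "\<And>t. T < t \<Longrightarrow> t \<le> l \<Longrightarrow> infdist (x + t *\<^sub>R u) C < t"
    using ray_last_touching_point[OF x u l(1) y ball] by blast
  define c where "c = x + T *\<^sub>R u"
  have "c \<notin> C" using DT \<open>0 < T\<close> by (auto simp: c_def)
  have dist_c: "dist c x = T" "dist c (x + l *\<^sub>R u) = l - T"
    using u \<open>0 < T\<close> \<open>T \<le> l / 2\<close> by (simp_all add: c_def dist_norm flip: scaleR_diff_left)
  have near_c: "dist c x = infdist c C" using dist_c DT by (simp add: c_def)
  have diff_c: "(\<lambda>y. infdist y C) differentiable (at c)"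
    using diff[OF \<open>c \<notin> C\<close>] dist_c \<open>T \<le> l / 2\<close> l by simp
  have "T < l / 2"
  proof (rule ccontr)
    assume "\<not> T < l / 2"
    then have "dist c (x + l *\<^sub>R u) = infdist c C" using dist_c DT \<open>T \<le> l / 2\<close> by (simp add: c_def)
    then have "x = x + l *\<^sub>R u" using nearest_point_unique[OF diff_c \<open>c \<notin> C\<close> x near_c y] by simp
    then show False using l u by simp
  qed
  define h where "h = min (T / 2) (l / 2 - T)"
  have h: "0 < h" "h < infdist c C" "T + h \<le> l"
    using \<open>0 < T\<close> \<open>T < l / 2\<close> DT by (auto simp: h_def c_def)
  have "infdist (c + h *\<^sub>R sgn (c - x)) C = infdist c C + h"
  proof (rule infdist_grows_along_nearest_direction[OF C x \<open>c \<notin> C\<close> near_c h(1,2)])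
    fix w assume "w \<in> cball c h" "w \<notin> C"
    moreover have "dist w x \<le> dist w c + dist c x" by (rule dist_triangle)
    ultimately have "dist w x < r" using dist_c h l by (simp add: dist_commute h_def)
    with \<open>w \<notin> C\<close> show "(\<lambda>y. infdist y C) differentiable (at w)" by (rule diff)
  qed
  moreover have "sgn (c - x) = u" using \<open>0 < T\<close> u by (simp add: c_def sgn_scaleR sgn_div_norm)
  ultimately have "infdist (x + (T + h) *\<^sub>R u) C = T + h"
    using DT by (simp add: c_def algebra_simps)
  then show False using beyond[of "T + h"] h by simp
qed

lemma gradient_unique:
  fixes v w :: "'a::real_inner"
  assumes "(f has_derivative (\<lambda>h. v \<bullet> h)) (at z)" "(f has_derivative (\<lambda>h. w \<bullet> h)) (at z)"
  shows "v = w"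
  using has_derivative_unique[OF assms] by (simp add: fun_eq_iff vector_eq_rdot)

lemma sgn_inner_eq_0_iff: "sgn a \<bullet> w = 0 \<longleftrightarrow> a \<bullet> w = 0"
  by (cases "a = 0") (simp_all add: sgn_div_norm)

lemma linear_tan_proj: "linear (tan_proj E x)"
  unfolding tan_proj_def by (rule linearI) (simp_all add: inner_add_left algebra_simps)

lemma tan_proj_inner_outer_normal:
  "norm (outer_normal E x) = 1 \<Longrightarrow> tan_proj E x v \<bullet> outer_normal E x = 0"
  by (simp add: tan_proj_def inner_diff_left dot_square_norm)

lemma tan_proj_idem:
  "norm (outer_normal E x) = 1 \<Longrightarrow> tan_proj E x (tan_proj E x v) = tan_proj E x v"
  using tan_proj_inner_outer_normal[of E x v] by (simp add: tan_proj_def[of E x "tan_proj E x v"])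

lemma gradient_lipschitz_taylor_bound:
  fixes \<phi> :: "'a::euclidean_space \<Rightarrow> real"
  assumes grad: "\<And>z. z \<in> ball q \<rho> \<Longrightarrow> (\<phi> has_derivative (\<lambda>h. g z \<bullet> h)) (at z)"
    and lip: "\<And>z. z \<in> ball q \<rho> \<Longrightarrow> norm (g z - g q) \<le> M * norm (z - q)"
    and k: "norm k < \<rho>" and "M \<ge> 0"
  shows "\<bar>\<phi> (q + k) - \<phi> q - g q \<bullet> k\<bar> \<le> M * (norm k)\<^sup>2"
proof -
  define \<psi> where "\<psi> z = \<phi> z - g q \<bullet> z" for z
  have S: "cball q (norm k) \<subseteq> ball q \<rho>" using k by auto
  have "norm (\<psi> (q + k) - \<psi> q) \<le> (M * norm k) * norm (q + k - q)"
  proof (rule differentiable_bound[where f'="\<lambda>z h. (g z - g q) \<bullet> h" and S="cball q (norm k)"])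
    fix z assume z: "z \<in> cball q (norm k)"
    then have "(\<psi> has_derivative (\<lambda>h. g z \<bullet> h - g q \<bullet> h)) (at z)"
      unfolding \<psi>_def using S by (intro derivative_intros grad) auto
    then show "(\<psi> has_derivative (\<lambda>h. (g z - g q) \<bullet> h)) (at z within cball q (norm k))"
      by (auto intro: has_derivative_at_withinI simp: inner_diff_left)
    show "onorm (\<lambda>h. (g z - g q) \<bullet> h) \<le> M * norm k"
    proof (rule onorm_le)
      fix h
      have "norm ((g z - g q) \<bullet> h) \<le> norm (g z - g q) * norm h"
        using Cauchy_Schwarz_ineq2 by simp
      also have "\<dots> \<le> M * norm (z - q) * norm h"
        using z S by (intro mult_right_mono lip) auto
      also have "\<dots> \<le> M * norm k * norm h"
        using z \<open>M \<ge> 0\<close> by (intro mult_right_mono mult_left_mono) (simp_all add: dist_norm norm_minus_commute)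
      finally show "norm ((g z - g q) \<bullet> h) \<le> M * norm k * norm h" .
    qed
  qed (auto simp: dist_norm)
  moreover have "\<psi> (q + k) - \<psi> q = \<phi> (q + k) - \<phi> q - g q \<bullet> k" by (simp add: \<psi>_def inner_add_right)
  ultimately show ?thesis by (simp add: power2_eq_square mult.assoc)
qed

lemma negative_on_inner_ball:
  fixes \<phi> :: "'a::real_inner \<Rightarrow> real"
  assumes taylor: "\<And>k. norm k < 2 * s \<Longrightarrow> \<bar>\<phi> (q + k) - v \<bullet> k\<bar> \<le> M * (norm k)\<^sup>2"
    and s: "s > 0" "M > 0" "2 * s * M \<le> norm v" and y: "y \<in> ball (q - s *\<^sub>R sgn v) s"
  shows "\<phi> y < 0"
proof -
  have "0 < 2 * s * M" using s by simp
  then have "v \<noteq> 0" using s(3) by auto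
  define k where "k = y - q"
  define n where "n = sgn v"
  have n: "norm n = 1" "v \<bullet> k = norm v * (n \<bullet> k)"
    using \<open>v \<noteq> 0\<close> by (simp_all add: n_def norm_sgn sgn_div_norm)
  have ks: "norm (k + s *\<^sub>R n) < s" using y by (simp add: k_def n_def dist_norm norm_minus_commute algebra_simps)
  then have "k \<noteq> 0" using n s by auto
  have "norm k \<le> norm (k + s *\<^sub>R n) + norm (s *\<^sub>R n)" by (metis add_diff_cancel norm_triangle_ineq4)
  then have "norm k < 2 * s" using ks n s by simp
  have "(norm (k + s *\<^sub>R n))\<^sup>2 = (k + s *\<^sub>R n) \<bullet> (k + s *\<^sub>R n)" by (simp add: dot_square_norm)
  also have "\<dots> = k \<bullet> k + 2 * s * (n \<bullet> k) + s * s * (n \<bullet> n)"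
    by (simp add: inner_add_left inner_add_right inner_commute algebra_simps)
  also have "\<dots> = (norm k)\<^sup>2 + 2 * s * (n \<bullet> k) + s\<^sup>2"
    using n(1) by (simp add: dot_square_norm power2_eq_square)
  finally have "(norm (k + s *\<^sub>R n))\<^sup>2 = (norm k)\<^sup>2 + 2 * s * (n \<bullet> k) + s\<^sup>2" .
  moreover have "(norm (k + s *\<^sub>R n))\<^sup>2 < s\<^sup>2" using ks by (simp add: power_strict_mono)
  ultimately have kn: "2 * s * (n \<bullet> k) < - (norm k)\<^sup>2" by simp
  have "\<phi> y \<le> v \<bullet> k + M * (norm k)\<^sup>2"
    using taylor[OF \<open>norm k < 2 * s\<close>] by (simp add: k_def abs_le_iff)
  moreover have "2 * s * (v \<bullet> k + M * (norm k)\<^sup>2) < 0"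
  proof -
    have "2 * s * (v \<bullet> k) < - norm v * (norm k)\<^sup>2"
      using mult_strict_left_mono[OF kn, of "norm v"] \<open>v \<noteq> 0\<close> n(2) by (simp add: algebra_simps)
    moreover have "2 * s * (M * (norm k)\<^sup>2) \<le> norm v * (norm k)\<^sup>2"
      using s(3) by (simp add: mult.assoc[symmetric] mult_right_mono)
    ultimately show ?thesis by (simp add: distrib_left)
  qed
  then have "v \<bullet> k + M * (norm k)\<^sup>2 < 0" using s by (simp add: mult_less_0_iff)
  ultimately show ?thesis by simp
qed

definition two_sided_balls :: "'a::euclidean_space set \<Rightarrow> 'a \<Rightarrow> real \<Rightarrow> bool" where
  "two_sided_balls E q t \<longleftrightarrow>
     ball (q - t *\<^sub>R outer_normal E q) t \<subseteq> E \<and> ball (q + t *\<^sub>R outer_normal E q) t \<inter> closure E = {}"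

locale C2_chart =
  fixes E :: "'a::euclidean_space set" and U :: "'a set" and \<phi> :: "'a \<Rightarrow> real"
    and g :: "'a \<Rightarrow> 'a" and g' :: "'a \<Rightarrow> 'a \<Rightarrow>\<^sub>L 'a"
  assumes open_U: "open U"
    and has_derivative_phi: "\<And>z. z \<in> U \<Longrightarrow> (\<phi> has_derivative (\<lambda>h. g z \<bullet> h)) (at z)"
    and has_derivative_g: "\<And>z. z \<in> U \<Longrightarrow> (g has_derivative blinfun_apply (g' z)) (at z)"
    and continuous_on_g': "continuous_on U g'"
    and g_nonzero: "\<And>z. z \<in> U \<Longrightarrow> g z \<noteq> 0"
    and E_Int_U: "E \<inter> U = {z\<in>U. \<phi> z < 0}"

lemma local_defining_fun_imp_C2_chart:
  assumes "local_defining_fun E x U \<phi>"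
  obtains g g' where "C2_chart E U \<phi> g g'" "x \<in> U"
proof -
  from assms obtain g and g' :: "'a \<Rightarrow> 'a \<Rightarrow>\<^sub>L 'a" where
    "\<forall>z\<in>U. (\<phi> has_derivative (\<lambda>h. g z \<bullet> h)) (at z) \<and> (g has_derivative blinfun_apply (g' z)) (at z)"
    "continuous_on U g'"
    unfolding local_defining_fun_def C2_fun_def by blast
  with assms have "C2_chart E U \<phi> g g'"
    unfolding local_defining_fun_def by unfold_locales auto
  with assms that show ?thesis unfolding local_defining_fun_def by blast
qed

context C2_chart
begin

lemma mem_E_iff: "z \<in> U \<Longrightarrow> z \<in> E \<longleftrightarrow> \<phi> z < 0"
  using E_Int_U by blast

lemma continuous_on_phi: "continuous_on U \<phi>"
  using has_derivative_phi by (meson continuous_at_imp_continuous_on has_derivative_continuous)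

lemma local_defining_fun_at: "q \<in> U \<Longrightarrow> local_defining_fun E q U \<phi>"
  unfolding local_defining_fun_def C2_fun_def
  using open_U has_derivative_phi has_derivative_g continuous_on_g' g_nonzero E_Int_U gradient_unique
  by metis

lemma eventually_along_line_in_U: "q \<in> U \<Longrightarrow> \<forall>\<^sub>F t in at_right 0. q + t *\<^sub>R h \<in> U"
proof -
  assume "q \<in> U"
  have "((\<lambda>t. q + t *\<^sub>R h) \<longlongrightarrow> q + 0 *\<^sub>R h) (at_right 0)" by (intro tendsto_intros)
  with \<open>q \<in> U\<close> show ?thesis using open_U topological_tendstoD by fastforce
qed

lemma eventually_along_line_in_E:
  assumes q: "q \<in> U" "\<phi> q = 0" and h: "g q \<bullet> h < 0"
  shows "\<forall>\<^sub>F t in at_right 0. q + t *\<^sub>R h \<in> E"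
proof -
  have "((\<lambda>t. \<phi> (q + t *\<^sub>R h)) has_real_derivative g q \<bullet> h) (at 0)"
    using has_real_derivative_along_line[of \<phi> _ q 0 h] has_derivative_phi[OF q(1)] by simp
  from DERIV_neg_dec_right[OF this h] q(2)
  have "\<forall>\<^sub>F t in at_right 0. \<phi> (q + t *\<^sub>R h) < 0"
    unfolding eventually_at_right_field by force
  with eventually_along_line_in_U[OF q(1), of h] show ?thesis
    by eventually_elim (use mem_E_iff in blast)
qed

lemma eventually_along_line_notin_E:
  assumes q: "q \<in> U" "\<phi> q = 0" and h: "g q \<bullet> h > 0"
  shows "\<forall>\<^sub>F t in at_right 0. q + t *\<^sub>R h \<notin> E"
proof -
  have "((\<lambda>t. \<phi> (q + t *\<^sub>R h)) has_real_derivative g q \<bullet> h) (at 0)"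
    using has_real_derivative_along_line[of \<phi> _ q 0 h] has_derivative_phi[OF q(1)] by simp
  from DERIV_pos_inc_right[OF this h] q(2)
  have "\<forall>\<^sub>F t in at_right 0. \<phi> (q + t *\<^sub>R h) > 0"
    unfolding eventually_at_right_field by force
  with eventually_along_line_in_U[OF q(1), of h] show ?thesis
    by eventually_elim (use mem_E_iff in fastforce)
qed

lemma not_in_closure_if_phi_pos:
  assumes "q \<in> U" "\<phi> q > 0"
  shows "q \<notin> closure E"
proof -
  have "open (U \<inter> \<phi> -` {0<..})"
    by (rule continuous_open_preimage[OF continuous_on_phi open_U]) auto
  moreover have "(U \<inter> \<phi> -` {0<..}) \<inter> E = {}" using mem_E_iff by fastforce
  ultimately have "(U \<inter> \<phi> -` {0<..}) \<inter> closure E = {}" by (simp add: open_Int_closure_eq_empty)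
  then show ?thesis using assms by auto
qed

lemma frontier_iff_phi_eq_0:
  assumes q: "q \<in> U"
  shows "q \<in> frontier E \<longleftrightarrow> \<phi> q = 0"
proof
  assume qF: "q \<in> frontier E"
  have "\<not> \<phi> q < 0"
  proof
    assume "\<phi> q < 0"
    have "open (U \<inter> \<phi> -` {..<0})"
      by (rule continuous_open_preimage[OF continuous_on_phi open_U]) auto
    moreover have "U \<inter> \<phi> -` {..<0} \<subseteq> E" using mem_E_iff by auto
    ultimately have "U \<inter> \<phi> -` {..<0} \<subseteq> interior E" by (intro interior_maximal)
    then have "q \<in> interior E" using q \<open>\<phi> q < 0\<close> by auto
    then show False using qF by (simp add: frontier_def)
  qed
  moreover have "\<not> \<phi> q > 0"
    using not_in_closure_if_phi_pos[OF q] qF by (auto simp: frontier_def)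
  ultimately show "\<phi> q = 0" by simp
next
  assume q0: "\<phi> q = 0"
  have "g q \<bullet> (- g q) < 0" using g_nonzero[OF q] by simp
  from eventually_along_line_in_E[OF q q0 this]
  have "\<forall>\<^sub>F t in at_right 0. q + t *\<^sub>R (- g q) \<in> closure E"
    by eventually_elim (rule closure_subset[THEN subsetD])
  moreover have "((\<lambda>t. q + t *\<^sub>R (- g q)) \<longlongrightarrow> q + 0 *\<^sub>R (- g q)) (at_right 0)"
    by (intro tendsto_intros)
  ultimately have "q \<in> closure E" by (auto intro: Lim_in_closed_set)
  moreover have "q \<notin> interior E" using mem_E_iff[OF q] q0 interior_subset by fastforce
  ultimately show "q \<in> frontier E" by (simp add: frontier_def)
qed

lemma sgn_g_eq_other_chart:
  assumes chart2: "C2_chart E U2 \<phi>2 g2 g2'" and q: "q \<in> U" "q \<in> U2" "q \<in> frontier E"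
  shows "sgn (g q) = sgn (g2 q)"
proof (rule ccontr)
  interpret B: C2_chart E U2 \<phi>2 g2 g2' by (rule chart2)
  define a where "a = sgn (g q)"
  define b where "b = sgn (g2 q)"
  assume "a \<noteq> b"
  have ne: "g q \<noteq> 0" "g2 q \<noteq> 0" using g_nonzero B.g_nonzero q by auto
  then have unit: "a \<bullet> a = 1" "b \<bullet> b = 1" by (simp_all add: a_def b_def dot_square_norm norm_sgn)
  have "0 < (a - b) \<bullet> (a - b)" using \<open>a \<noteq> b\<close> by simp
  then have ab: "a \<bullet> b < 1" using unit by (simp add: inner_diff_left inner_diff_right inner_commute)
  have "g q \<bullet> x = norm (g q) * (a \<bullet> x)" "g2 q \<bullet> x = norm (g2 q) * (b \<bullet> x)" for x
    using ne by (simp_all add: a_def b_def sgn_div_norm)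
  moreover have "a \<bullet> (b - a) < 0" "b \<bullet> (b - a) > 0"
    using ab unit by (simp_all add: inner_diff_right inner_commute)
  ultimately have "g q \<bullet> (b - a) < 0" "g2 q \<bullet> (b - a) > 0"
    using ne by (simp_all add: mult_pos_neg)
  moreover have "\<phi> q = 0" "\<phi>2 q = 0"
    using q frontier_iff_phi_eq_0 B.frontier_iff_phi_eq_0 by auto
  ultimately have "\<forall>\<^sub>F t in at_right 0. q + t *\<^sub>R (b - a) \<in> E \<and> q + t *\<^sub>R (b - a) \<notin> E"
    using q by (intro eventually_conj eventually_along_line_in_E B.eventually_along_line_notin_E)
  then show False using eventually_happens'[OF trivial_limit_at_right_real] by blast
qed

lemma outer_normal_eq:
  assumes q: "q \<in> U" "q \<in> frontier E"
  shows "outer_normal E q = sgn (g q)"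
proof -
  have "\<exists>n U' \<phi>' v. local_defining_fun E q U' \<phi>' \<and> (\<phi>' has_derivative (\<lambda>h. v \<bullet> h)) (at q)
      \<and> n = v /\<^sub>R norm v"
    using local_defining_fun_at[OF q(1)] has_derivative_phi[OF q(1)] by blast
  then obtain U' \<phi>' v where L: "local_defining_fun E q U' \<phi>'"
    and D: "(\<phi>' has_derivative (\<lambda>h. v \<bullet> h)) (at q)" and N: "outer_normal E q = v /\<^sub>R norm v"
    using someI_ex unfolding outer_normal_def by (smt (verit))
  obtain g2 g2' where chart2: "C2_chart E U' \<phi>' g2 g2'" and "q \<in> U'"
    using local_defining_fun_imp_C2_chart[OF L] by blast
  have "v = g2 q" using gradient_unique[OF D C2_chart.has_derivative_phi[OF chart2 \<open>q \<in> U'\<close>]] .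
  then show ?thesis
    using N sgn_g_eq_other_chart[OF chart2 q(1) \<open>q \<in> U'\<close> q(2)] by (simp add: sgn_div_norm)
qed

lemma norm_outer_normal: "q \<in> U \<Longrightarrow> q \<in> frontier E \<Longrightarrow> norm (outer_normal E q) = 1"
  using outer_normal_eq g_nonzero by (simp add: norm_sgn)


lemma frontier_point_on_segment:
  assumes U: "\<And>s. \<bar>s\<bar> \<le> r \<Longrightarrow> c + s *\<^sub>R n \<in> U"
    and "\<phi> (c + (- r) *\<^sub>R n) \<le> 0" "0 \<le> \<phi> (c + r *\<^sub>R n)" "0 \<le> r"
  obtains s where "\<bar>s\<bar> \<le> r" "c + s *\<^sub>R n \<in> frontier E"
proof -
  have "continuous_on {- r..r} (\<lambda>s. c + s *\<^sub>R n)" by (intro continuous_intros)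
  moreover have "(\<lambda>s. c + s *\<^sub>R n) ` {- r..r} \<subseteq> U" using U by (auto simp: abs_le_iff)
  ultimately have "continuous_on {- r..r} (\<lambda>s. \<phi> (c + s *\<^sub>R n))"
    by (rule continuous_on_compose2[OF continuous_on_phi])
  then obtain s where "- r \<le> s" "s \<le> r" "\<phi> (c + s *\<^sub>R n) = 0"
    using IVT'[of "\<lambda>s. \<phi> (c + s *\<^sub>R n)" "- r" 0 r] assms(2-4) by auto
  then have s: "\<bar>s\<bar> \<le> r" by (simp add: abs_le_iff)
  moreover have "c + s *\<^sub>R n \<in> frontier E"
    using frontier_iff_phi_eq_0 U[OF s] \<open>\<phi> (c + s *\<^sub>R n) = 0\<close> by blast
  ultimately show ?thesis by (rule that)
qed

lemma tangent_vector_frontier: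
  assumes p: "p \<in> U" "p \<in> frontier E" and tau: "g p \<bullet> \<tau> = 0"
  shows "tangent_vector (frontier E) p \<tau>"
  unfolding tangent_vector_def
proof (intro allI impI)
  fix \<eta> :: real assume "\<eta> > 0"
  define n where "n = sgn (g p)"
  define R where "R = norm \<tau> + \<eta>"
  have "g p \<noteq> 0" using g_nonzero p(1) by blast
  then have n: "norm n = 1" "g p \<bullet> n = norm (g p)"
    by (simp_all add: n_def norm_sgn sgn_div_norm dot_square_norm power2_eq_square)
  have "R > 0" using \<open>\<eta> > 0\<close> by (simp add: R_def add_nonneg_pos)
  define e where "e = \<eta> * norm (g p) / (2 * R)"
  have "e > 0" using \<open>\<eta> > 0\<close> \<open>R > 0\<close> \<open>g p \<noteq> 0\<close> by (simp add: e_def)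
  obtain d1 where "d1 > 0" and d1: "\<And>y. norm (y - p) < d1 \<Longrightarrow>
      norm (\<phi> y - \<phi> p - g p \<bullet> (y - p)) \<le> e * norm (y - p)"
    using has_derivative_phi[OF p(1)] \<open>e > 0\<close> unfolding has_derivative_at_alt by blast
  obtain d2 where "d2 > 0" and d2: "ball p d2 \<subseteq> U" using open_U p(1) openE by blast
  have "\<forall>\<^sub>F t in at_right 0. t * R < min d1 d2"
    using \<open>d1 > 0\<close> \<open>d2 > 0\<close> by (intro eventually_at_right_0_mult_less) simp
  then show "\<forall>\<^sub>F t in at_right 0. \<exists>q\<in>frontier E. norm (q - p - t *\<^sub>R \<tau>) \<le> \<eta> * t"
    using eventually_at_right_less[of 0]
  proof eventually_elim
    case (elim t)
    define c where "c = p + t *\<^sub>R \<tau>"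
    have near: "norm (c + s *\<^sub>R n - p) \<le> t * R" if "\<bar>s\<bar> \<le> \<eta> * t" for s
    proof -
      have "norm (c + s *\<^sub>R n - p) \<le> t * norm \<tau> + \<bar>s\<bar>"
        using norm_triangle_ineq[of "t *\<^sub>R \<tau>" "s *\<^sub>R n"] elim(2) n(1) by (simp add: c_def)
      also have "\<dots> \<le> t * R" using that by (simp add: R_def algebra_simps)
      finally show ?thesis .
    qed
    then have in_U: "c + s *\<^sub>R n \<in> U" if "\<bar>s\<bar> \<le> \<eta> * t" for s
      using that elim(1) d2 by (force simp: dist_norm norm_minus_commute)
    have est: "\<bar>\<phi> (c + s *\<^sub>R n) - s * norm (g p)\<bar> \<le> \<eta> * t * norm (g p) / 2"
      if "\<bar>s\<bar> \<le> \<eta> * t" for s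
    proof -
      have "g p \<bullet> (c + s *\<^sub>R n - p) = s * norm (g p)" using tau n by (simp add: c_def inner_add_right)
      moreover have "\<phi> p = 0" using p frontier_iff_phi_eq_0 by blast
      ultimately have "\<bar>\<phi> (c + s *\<^sub>R n) - s * norm (g p)\<bar> \<le> e * norm (c + s *\<^sub>R n - p)"
        using d1[of "c + s *\<^sub>R n"] near[OF that] elim(1) by simp
      also have "\<dots> \<le> e * (t * R)" using near[OF that] \<open>e > 0\<close> by (intro mult_left_mono) simp_all
      also have "\<dots> = \<eta> * t * norm (g p) / 2" using \<open>R > 0\<close> by (simp add: e_def)
      finally show ?thesis .
    qed
    have pos: "0 < \<eta> * t * norm (g p)" using elim(2) \<open>\<eta> > 0\<close> \<open>g p \<noteq> 0\<close> by simp
    have ends: "\<bar>- (\<eta> * t)\<bar> \<le> \<eta> * t" "\<bar>\<eta> * t\<bar> \<le> \<eta> * t" using elim(2) \<open>\<eta> > 0\<close> by simp_all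
    have "\<phi> (c + (- (\<eta> * t)) *\<^sub>R n) \<le> 0"
      using est[OF ends(1)] pos unfolding abs_le_iff mult_minus_left by linarith
    moreover have "0 \<le> \<phi> (c + (\<eta> * t) *\<^sub>R n)"
      using est[OF ends(2)] pos unfolding abs_le_iff by linarith
    ultimately obtain s where "\<bar>s\<bar> \<le> \<eta> * t" "c + s *\<^sub>R n \<in> frontier E"
      using frontier_point_on_segment[OF in_U] elim(2) \<open>\<eta> > 0\<close> by (metis less_imp_le mult_pos_pos)
    moreover have "norm (c + s *\<^sub>R n - p - t *\<^sub>R \<tau>) = \<bar>s\<bar>" using n by (simp add: c_def)
    ultimately show ?case by (metis order_eq_refl order_trans)
  qed
qed


lemma g'_symmetric: "x \<in> U \<Longrightarrow> a \<bullet> g' x b = b \<bullet> g' x a"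
  using gradient_derivative_symmetric[OF open_U _ has_derivative_phi has_derivative_g] by blast

definition dnormal :: "'a \<Rightarrow> 'a \<Rightarrow> 'a" where
  "dnormal x k = (g' x k - (sgn (g x) \<bullet> g' x k) *\<^sub>R sgn (g x)) /\<^sub>R norm (g x)"

lemma has_derivative_sgn_g:
  assumes x: "x \<in> U"
  shows "((\<lambda>z. sgn (g z)) has_derivative dnormal x) (at x)"
proof -
  have gx: "g x \<noteq> 0" using g_nonzero x by auto
  have "((\<lambda>z. norm (g z)) has_derivative (\<lambda>k. sgn (g x) \<bullet> g' x k)) (at x)"
    using has_derivative_compose[OF has_derivative_g[OF x] has_derivative_norm[OF gx]]
    by (simp add: inner_commute)
  from Deriv.has_derivative_inverse[OF _ this] gx
  have "((\<lambda>z. inverse (norm (g z))) has_derivative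
      (\<lambda>k. - (inverse (norm (g x)) * (sgn (g x) \<bullet> g' x k) * inverse (norm (g x))))) (at x)"
    by simp
  note inv = this
  have "dnormal x = (\<lambda>k. inverse (norm (g x)) *\<^sub>R g' x k
      + (- (inverse (norm (g x)) * (sgn (g x) \<bullet> g' x k) * inverse (norm (g x)))) *\<^sub>R g x)"
  proof
    fix k
    define N where "N = norm (g x)"
    define n where "n = sgn (g x)"
    have "N \<noteq> 0" "g x = N *\<^sub>R n" using gx by (simp_all add: N_def n_def sgn_div_norm)
    then show "dnormal x k = inverse (norm (g x)) *\<^sub>R g' x k
        + (- (inverse (norm (g x)) * (sgn (g x) \<bullet> g' x k) * inverse (norm (g x)))) *\<^sub>R g x"
      unfolding dnormal_def N_def[symmetric] n_def[symmetric]
      by (simp add: algebra_simps)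
  qed
  moreover have "(\<lambda>z. sgn (g z)) = (\<lambda>z. inverse (norm (g z)) *\<^sub>R g z)"
    by (simp add: fun_eq_iff sgn_div_norm)
  ultimately show ?thesis using has_derivative_scaleR[OF inv has_derivative_g[OF x]] by simp
qed

lemma sgn_g_inner_dnormal: "x \<in> U \<Longrightarrow> sgn (g x) \<bullet> dnormal x k = 0"
  using g_nonzero[of x] by (simp add: dnormal_def inner_diff_right dot_square_norm norm_sgn)

lemma dnormal_symmetric:
  assumes "x \<in> U" "a \<bullet> g x = 0" "b \<bullet> g x = 0"
  shows "a \<bullet> dnormal x b = b \<bullet> dnormal x a"
  using assms g'_symmetric[of x a b]
  by (simp add: dnormal_def inner_diff_right sgn_div_norm inner_commute)

lemma has_derivative_outer_normal_within:
  assumes x: "x \<in> U" "x \<in> frontier E"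
  shows "(outer_normal E has_derivative (\<lambda>v. dnormal x (tan_proj E x v))) (at x within frontier E)"
proof -
  define n where "n = sgn (g x)"
  have n: "outer_normal E x = n" using outer_normal_eq[OF x] by (simp add: n_def)
  obtain d where "d > 0" and d: "ball x d \<subseteq> U" using open_U x(1) openE by blast
  then have near: "y \<in> U" if "dist y x < d" for y using that by (auto simp: dist_commute)
  have N: "(outer_normal E has_derivative dnormal x) (at x within frontier E)"
    using has_derivative_at_withinI[OF has_derivative_sgn_g[OF x(1)]] \<open>d > 0\<close> x(2)
    by (rule has_derivative_transform_within) (use near outer_normal_eq in auto)
  have "((\<lambda>y. inverse (norm (g x)) * \<phi> y) has_derivative (\<lambda>k. n \<bullet> k)) (at x within frontier E)"
    using has_derivative_mult_right[OF has_derivative_at_withinI[OF has_derivative_phi[OF x(1)]],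
        of "inverse (norm (g x))"]
    by (simp add: n_def sgn_div_norm)
  then have Z: "((\<lambda>y. 0) has_derivative (\<lambda>k. n \<bullet> k)) (at x within frontier E)"
    by (rule has_derivative_transform_within[OF _ \<open>d > 0\<close> x(2)])
      (simp add: near frontier_iff_phi_eq_0)
  have lin: "linear (dnormal x)"
    using has_derivative_sgn_g[OF x(1)] by (simp add: has_derivative_linear)
  have "dnormal x k - (n \<bullet> k) *\<^sub>R dnormal x n = dnormal x (tan_proj E x k)" for k
    by (simp add: tan_proj_def n linear_diff[OF lin] linear_scale[OF lin] inner_commute[of k n])
  with has_derivative_diff[OF N has_derivative_scaleR_left[OF Z, of "dnormal x n"]]
  show ?thesis by simp
qed

lemma second_fund_eq:
  assumes x: "x \<in> U" "x \<in> frontier E"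
  shows "second_fund E x = (\<lambda>v. dnormal x (tan_proj E x v))"
proof -
  define L0 where "L0 v = dnormal x (tan_proj E x v)" for v
  define P where "P L \<longleftrightarrow> linear L \<and> (\<forall>v. L v = L (tan_proj E x v))
      \<and> (outer_normal E has_derivative L) (at x within frontier E)" for L
  have idem: "tan_proj E x (tan_proj E x v) = tan_proj E x v" for v
    using tan_proj_idem norm_outer_normal[OF x] by blast
  have "linear (dnormal x)"
    using has_derivative_sgn_g[OF x(1)] by (simp add: has_derivative_linear)
  then have "P L0"
    using has_derivative_outer_normal_within[OF x] idem linear_tan_proj
    by (auto simp: P_def L0_def[abs_def] intro: linear_compose[unfolded o_def])
  moreover have "L = L0" if "P L" for L
  proof
    fix v
    have "g x \<bullet> tan_proj E x v = 0"
      using tan_proj_inner_outer_normal[OF norm_outer_normal[OF x], of v] outer_normal_eq[OF x]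
        g_nonzero[OF x(1)] by (simp add: sgn_div_norm inner_commute)
    then have "L (tan_proj E x v) = dnormal x (tan_proj E x (tan_proj E x v))"
      using that unfolding P_def
      by (intro has_derivative_within_tangent_unique[OF _ has_derivative_outer_normal_within[OF x]
            tangent_vector_frontier[OF x]]) blast+
    then show "L v = L0 v" using that idem by (simp add: P_def L0_def)
  qed
  ultimately have "second_fund E x = L0"
    unfolding second_fund_def P_def[symmetric] by (metis someI)
  then show ?thesis by (simp add: L0_def[abs_def])
qed


lemma g_locally_lipschitz:
  assumes "x \<in> U"
  obtains \<rho> M where "\<rho> > 0" "M > 0" "ball x \<rho> \<subseteq> U"
    "\<And>z1 z2. z1 \<in> ball x \<rho> \<Longrightarrow> z2 \<in> ball x \<rho> \<Longrightarrow> norm (g z1 - g z2) \<le> M * norm (z1 - z2)"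
proof -
  obtain \<rho>1 where "\<rho>1 > 0" and \<rho>1: "\<forall>z\<in>U. dist z x < \<rho>1 \<longrightarrow> dist (g' z) (g' x) < 1"
    using continuous_on_g' assms unfolding continuous_on_iff by (meson zero_less_one)
  obtain \<rho>2 where "\<rho>2 > 0" and \<rho>2: "ball x \<rho>2 \<subseteq> U" using open_U assms openE by blast
  define \<rho> where "\<rho> = min \<rho>1 \<rho>2"
  define M where "M = norm (g' x) + 1"
  have "ball x \<rho> \<subseteq> U" using \<rho>2 by (auto simp: \<rho>_def)
  have bound: "norm (g' z) \<le> M" if "z \<in> ball x \<rho>" for z
  proof -
    have "z \<in> U" "dist z x < \<rho>1" using \<rho>2 that by (auto simp: \<rho>_def dist_commute)
    then have "dist (g' z) (g' x) < 1" using \<rho>1 by blast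
    then show ?thesis using norm_triangle_ineq2[of "g' z" "g' x"] by (simp add: M_def dist_norm)
  qed
  have "norm (g z1 - g z2) \<le> M * norm (z1 - z2)" if "z1 \<in> ball x \<rho>" "z2 \<in> ball x \<rho>" for z1 z2
  proof (rule differentiable_bound[where f'="\<lambda>z. blinfun_apply (g' z)" and S="ball x \<rho>"])
    show "(g has_derivative blinfun_apply (g' z)) (at z within ball x \<rho>)" if "z \<in> ball x \<rho>" for z
      using has_derivative_g \<open>ball x \<rho> \<subseteq> U\<close> that by (blast intro: has_derivative_at_withinI)
    show "onorm (blinfun_apply (g' z)) \<le> M" if "z \<in> ball x \<rho>" for z
      using bound[OF that] by (simp add: norm_blinfun.rep_eq)
  qed (use that in auto)
  moreover have "\<rho> > 0" "M > 0" using \<open>\<rho>1 > 0\<close> \<open>\<rho>2 > 0\<close> by (simp_all add: \<rho>_def M_def add_nonneg_pos)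
  ultimately show ?thesis using that \<open>ball x \<rho> \<subseteq> U\<close> by blast
qed

lemma two_sided_balls_if_quadratic_bound:
  assumes q: "q \<in> U" "q \<in> frontier E" and "t > 0" "M > 0" and sub: "ball q (2 * t) \<subseteq> U"
    and "2 * t * M \<le> norm (g q)"
    and taylor: "\<And>k. norm k < 2 * t \<Longrightarrow> \<bar>\<phi> (q + k) - g q \<bullet> k\<bar> \<le> M * (norm k)\<^sup>2"
  shows "two_sided_balls E q t"
proof -
  have near: "y \<in> U" if "y \<in> ball (q + t *\<^sub>R v) t" "norm v = 1" for y v
  proof -
    have "dist q y < 2 * t"
      using that dist_triangle[of q y "q + t *\<^sub>R v"] \<open>t > 0\<close> by (simp add: dist_norm)
    then show ?thesis using sub by auto
  qed
  have n: "outer_normal E q = sgn (g q)" "norm (sgn (g q)) = 1"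
    using outer_normal_eq[OF q] g_nonzero[OF q(1)] by (simp_all add: norm_sgn)
  have "y \<in> E" if "y \<in> ball (q - t *\<^sub>R sgn (g q)) t" for y
  proof -
    have "\<phi> y < 0"
      using negative_on_inner_ball[OF taylor \<open>t > 0\<close> \<open>M > 0\<close> \<open>2 * t * M \<le> norm (g q)\<close> that] .
    moreover have "y \<in> U" using near[of y "- sgn (g q)"] that n(2) by simp
    ultimately show ?thesis using mem_E_iff by blast
  qed
  moreover have "y \<notin> closure E" if "y \<in> ball (q + t *\<^sub>R sgn (g q)) t" for y
  proof -
    have "- \<phi> y < 0"
      using negative_on_inner_ball[of t "\<lambda>z. - \<phi> z" q "- g q" M y] taylor \<open>t > 0\<close> \<open>M > 0\<close>
        \<open>2 * t * M \<le> norm (g q)\<close> that by (simp add: abs_minus_commute sgn_minus)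
    moreover have "y \<in> U" using near[OF that n(2)] .
    ultimately show ?thesis using not_in_closure_if_phi_pos by simp
  qed
  ultimately show ?thesis unfolding two_sided_balls_def n(1) by blast
qed

lemma local_two_sided_balls:
  assumes x: "x \<in> U"
  obtains \<rho> t where "\<rho> > 0" "t > 0"
    "\<And>q. q \<in> frontier E \<Longrightarrow> dist q x < \<rho> \<Longrightarrow> two_sided_balls E q t"
proof -
  obtain \<rho> M where "\<rho> > 0" "M > 0" and \<rho>U: "ball x \<rho> \<subseteq> U"
    and lip: "\<And>z1 z2. z1 \<in> ball x \<rho> \<Longrightarrow> z2 \<in> ball x \<rho> \<Longrightarrow> norm (g z1 - g z2) \<le> M * norm (z1 - z2)"
    using g_locally_lipschitz[OF x] by blast
  define \<gamma> where "\<gamma> = norm (g x)"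
  have "\<gamma> > 0" using g_nonzero[OF x] by (simp add: \<gamma>_def)
  define t where "t = min (\<rho> / 4) (\<gamma> / (4 * M))"
  have "t > 0" using \<open>\<rho> > 0\<close> \<open>\<gamma> > 0\<close> \<open>M > 0\<close> by (simp add: t_def)
  have balls: "two_sided_balls E q t" if q: "q \<in> frontier E" "dist q x < min (\<rho> / 2) (\<gamma> / (2 * M))" for q
  proof -
    have "dist q x < \<rho> / 2" using q(2) by simp
    then have "q \<in> ball x \<rho>" using \<open>\<rho> > 0\<close> by (simp add: dist_commute)
    then have "q \<in> U" "\<phi> q = 0" using \<rho>U q(1) frontier_iff_phi_eq_0 by auto
    have "\<gamma> \<le> norm (g q) + M * norm (x - q)"
      using norm_triangle_ineq2[of "g x" "g q"] lip[of x q] \<open>\<rho> > 0\<close> \<open>q \<in> ball x \<rho>\<close>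
      by (simp add: \<gamma>_def)
    moreover have "M * norm (x - q) < \<gamma> / 2"
      using q(2) \<open>M > 0\<close> by (simp add: dist_norm norm_minus_commute field_simps)
    moreover have "2 * t * M \<le> \<gamma> / 2"
    proof -
      have "t \<le> \<gamma> / (4 * M)" by (simp add: t_def)
      then show ?thesis using \<open>M > 0\<close> by (simp add: field_simps)
    qed
    ultimately have "2 * t * M \<le> norm (g q)" by linarith
    have sub: "ball q (2 * t) \<subseteq> ball x \<rho>"
    proof
      fix y assume "y \<in> ball q (2 * t)"
      moreover have "2 * t \<le> \<rho> / 2" by (simp add: t_def)
      ultimately show "y \<in> ball x \<rho>"
        using \<open>dist q x < \<rho> / 2\<close> dist_triangle[of x y q] by (simp add: dist_commute)
    qed
    have taylor: "\<bar>\<phi> (q + k) - g q \<bullet> k\<bar> \<le> M * (norm k)\<^sup>2" if "norm k < 2 * t" for k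
    proof -
      have "\<bar>\<phi> (q + k) - \<phi> q - g q \<bullet> k\<bar> \<le> M * (norm k)\<^sup>2"
      proof (rule gradient_lipschitz_taylor_bound[where \<rho>="2 * t"])
        show "(\<phi> has_derivative (\<lambda>h. g z \<bullet> h)) (at z)" if "z \<in> ball q (2 * t)" for z
          using that sub \<rho>U has_derivative_phi by blast
        show "norm (g z - g q) \<le> M * norm (z - q)" if "z \<in> ball q (2 * t)" for z
          using that sub lip \<open>q \<in> ball x \<rho>\<close> by blast
      qed (use that \<open>M > 0\<close> in auto)
      then show ?thesis using \<open>\<phi> q = 0\<close> by simp
    qed
    show ?thesis
      using two_sided_balls_if_quadratic_bound[OF \<open>q \<in> U\<close> q(1) \<open>t > 0\<close> \<open>M > 0\<close> _
          \<open>2 * t * M \<le> norm (g q)\<close> taylor] sub \<rho>U by blast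
  qed
  moreover have "min (\<rho> / 2) (\<gamma> / (2 * M)) > 0" using \<open>\<rho> > 0\<close> \<open>\<gamma> > 0\<close> \<open>M > 0\<close> by simp
  ultimately show ?thesis using that \<open>t > 0\<close> by blast
qed

end

lemma C2_regular_chart:
  assumes "C2_regular E" "x \<in> frontier E"
  obtains U \<phi> g g' where "C2_chart E U \<phi> g g'" "x \<in> U"
  using assms local_defining_fun_imp_C2_chart unfolding C2_regular_def by metis

lemma open_if_C2_regular:
  assumes "C2_regular E"
  shows "open E"
proof -
  have "x \<in> interior E" if "x \<in> E" for x
  proof (rule ccontr)
    assume "x \<notin> interior E"
    then have "x \<in> frontier E" using that closure_subset by (auto simp: frontier_def)
    then obtain U \<phi> g g' where chart: "C2_chart E U \<phi> g g'" and "x \<in> U"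
      using C2_regular_chart assms by blast
    then have "\<phi> x = 0" "\<phi> x < 0"
      using C2_chart.frontier_iff_phi_eq_0[OF chart] C2_chart.mem_E_iff[OF chart] that
        \<open>x \<in> frontier E\<close> by blast+
    then show False by simp
  qed
  then have "interior E = E" using interior_subset by blast
  then show ?thesis by (metis open_interior)
qed

lemma norm_outer_normal:
  assumes "C2_regular E" "x \<in> frontier E"
  shows "norm (outer_normal E x) = 1"
proof -
  obtain U \<phi> g g' where "C2_chart E U \<phi> g g'" "x \<in> U" using C2_regular_chart assms by blast
  then show ?thesis using C2_chart.norm_outer_normal assms(2) by blast
qed

lemma tan_proj_eq_0_at_frontier_extremum:
  assumes reg: "C2_regular E" and p: "p \<in> frontier E"
    and f: "(f has_derivative (\<lambda>k. v \<bullet> k)) (at p within frontier E)" and "\<delta> > 0"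
    and ext: "(\<forall>q\<in>frontier E. dist q p < \<delta> \<longrightarrow> f q \<le> f p) \<or> (\<forall>q\<in>frontier E. dist q p < \<delta> \<longrightarrow> f p \<le> f q)"
  shows "tan_proj E p v = 0"
proof -
  obtain U \<phi> g g' where chart: "C2_chart E U \<phi> g g'" and "p \<in> U" using C2_regular_chart reg p by blast
  define n where "n = outer_normal E p"
  have n: "n = sgn (g p)" "norm n = 1"
    using C2_chart.outer_normal_eq[OF chart \<open>p \<in> U\<close> p] norm_outer_normal[OF reg p] by (simp_all add: n_def)
  have tangent: "tangent_vector (frontier E) p \<tau>" if "\<tau> \<bullet> n = 0" for \<tau>
    using C2_chart.tangent_vector_frontier[OF chart \<open>p \<in> U\<close> p] that n(1) sgn_inner_eq_0_iff
    by (metis inner_commute)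
  have f': "((\<lambda>q. - f q) has_derivative (\<lambda>k. (- v) \<bullet> k)) (at p within frontier E)"
    using has_derivative_minus[OF f] by simp
  have orth: "v \<bullet> \<tau> = 0" if "\<tau> \<bullet> n = 0" for \<tau>
  proof -
    have "(- \<tau>) \<bullet> n = 0" using that by simp
    note le = tangent_vector_local_max[OF _ tangent \<open>\<delta> > 0\<close>]
    from ext show ?thesis
    proof
      assume "\<forall>q\<in>frontier E. dist q p < \<delta> \<longrightarrow> f q \<le> f p"
      then have "v \<bullet> \<tau> \<le> 0" "v \<bullet> (- \<tau>) \<le> 0"
        using le[OF f that] le[OF f \<open>(- \<tau>) \<bullet> n = 0\<close>] by blast+
      then show ?thesis by simp
    next
      assume "\<forall>q\<in>frontier E. dist q p < \<delta> \<longrightarrow> f p \<le> f q"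
      then have "- v \<bullet> \<tau> \<le> 0" "- v \<bullet> (- \<tau>) \<le> 0"
        using le[OF f' that] le[OF f' \<open>(- \<tau>) \<bullet> n = 0\<close>] by (simp_all add: dist_commute)
      then show ?thesis by simp
    qed
  qed
  define w where "w = tan_proj E p v"
  have "w \<bullet> n = 0" using tan_proj_inner_outer_normal n(2) by (simp add: n_def w_def)
  then have "v \<bullet> w = 0" by (rule orth)
  have "w = v - (v \<bullet> n) *\<^sub>R n" by (simp add: w_def tan_proj_def n_def)
  then have "w \<bullet> w = v \<bullet> w - (v \<bullet> n) * (w \<bullet> n)"
    by (metis inner_commute inner_diff_left inner_scaleR_left)
  then show ?thesis using \<open>v \<bullet> w = 0\<close> \<open>w \<bullet> n = 0\<close> by (simp add: w_def)
qed

lemma has_derivative_outer_normal: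
  assumes "C2_regular E" "x \<in> frontier E"
  shows "(outer_normal E has_derivative second_fund E x) (at x within frontier E)"
proof -
  obtain U \<phi> g g' where chart: "C2_chart E U \<phi> g g'" and "x \<in> U" using C2_regular_chart assms by blast
  show ?thesis
    unfolding C2_chart.second_fund_eq[OF chart \<open>x \<in> U\<close> assms(2)]
    by (rule C2_chart.has_derivative_outer_normal_within[OF chart \<open>x \<in> U\<close> assms(2)])
qed

lemma outer_normal_inner_second_fund:
  assumes "C2_regular E" "x \<in> frontier E"
  shows "outer_normal E x \<bullet> second_fund E x v = 0"
proof -
  obtain U \<phi> g g' where chart: "C2_chart E U \<phi> g g'" and "x \<in> U" using C2_regular_chart assms by blast
  show ?thesis
    unfolding C2_chart.second_fund_eq[OF chart \<open>x \<in> U\<close> assms(2)]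
      C2_chart.outer_normal_eq[OF chart \<open>x \<in> U\<close> assms(2)]
    by (rule C2_chart.sgn_g_inner_dnormal[OF chart \<open>x \<in> U\<close>])
qed

lemma second_fund_symmetric:
  assumes reg: "C2_regular E" and x: "x \<in> frontier E"
  shows "a \<bullet> second_fund E x b = b \<bullet> second_fund E x a"
proof -
  obtain U \<phi> g g' where chart: "C2_chart E U \<phi> g g'" and "x \<in> U" using C2_regular_chart reg x by blast
  interpret C2_chart E U \<phi> g g' by (rule chart)
  define n where "n = outer_normal E x"
  have n: "n = sgn (g x)" "norm n = 1"
    using outer_normal_eq[OF \<open>x \<in> U\<close> x] norm_outer_normal[OF \<open>x \<in> U\<close> x] by (simp_all add: n_def)
  have B: "second_fund E x = (\<lambda>v. dnormal x (tan_proj E x v))" by (rule second_fund_eq[OF \<open>x \<in> U\<close> x])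
  have tangent: "tan_proj E x v \<bullet> g x = 0" for v
  proof -
    have "tan_proj E x v \<bullet> sgn (g x) = 0"
      using tan_proj_inner_outer_normal[OF n(2)[unfolded n_def], of v] n(1) by (simp add: n_def)
    then show ?thesis using sgn_inner_eq_0_iff by (metis inner_commute)
  qed
  have reduce: "c \<bullet> dnormal x w = tan_proj E x c \<bullet> dnormal x w" for c w
    using sgn_g_inner_dnormal[OF \<open>x \<in> U\<close>, of w] n(1)
    by (simp add: tan_proj_def n_def[symmetric] inner_diff_left)
  have "a \<bullet> dnormal x (tan_proj E x b) = tan_proj E x a \<bullet> dnormal x (tan_proj E x b)"
    by (rule reduce)
  also have "\<dots> = tan_proj E x b \<bullet> dnormal x (tan_proj E x a)"
    by (rule dnormal_symmetric[OF \<open>x \<in> U\<close> tangent tangent])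
  also have "\<dots> = b \<bullet> dnormal x (tan_proj E x a)"
    by (rule reduce[symmetric])
  finally show ?thesis unfolding B .
qed

lemma ball_along_unit_mono:
  fixes u :: "'a::real_normed_vector"
  assumes "norm u = 1" "0 < s" "s \<le> t"
  shows "ball (q + s *\<^sub>R u) s \<subseteq> ball (q + t *\<^sub>R u) t"
proof
  fix y assume "y \<in> ball (q + s *\<^sub>R u) s"
  moreover have "dist (q + t *\<^sub>R u) (q + s *\<^sub>R u) = t - s"
    using assms by (simp add: dist_norm flip: scaleR_diff_left)
  ultimately show "y \<in> ball (q + t *\<^sub>R u) t"
    using dist_triangle[of "q + t *\<^sub>R u" y "q + s *\<^sub>R u"] by simp
qed

lemma two_sided_balls_mono:
  assumes "norm (outer_normal E q) = 1" "two_sided_balls E q t" "0 < s" "s \<le> t"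
  shows "two_sided_balls E q s"
  using ball_along_unit_mono[of "- outer_normal E q" s t q] ball_along_unit_mono[of "outer_normal E q" s t q]
    assms unfolding two_sided_balls_def by auto

lemma uniform_two_sided_balls:
  fixes E :: "'a::euclidean_space set"
  assumes bounded: "bounded E" and reg: "C2_regular E"
  obtains t where "t > 0" "\<And>q. q \<in> frontier E \<Longrightarrow> two_sided_balls E q t"
proof -
  have "\<exists>\<rho>>0. \<exists>t>0. \<forall>q\<in>frontier E. dist q x < \<rho> \<longrightarrow> two_sided_balls E q t"
    if x: "x \<in> frontier E" for x
  proof -
    obtain U \<phi> g g' where chart: "C2_chart E U \<phi> g g'" and "x \<in> U" using C2_regular_chart reg x by blast
    show ?thesis using C2_chart.local_two_sided_balls[OF chart \<open>x \<in> U\<close>] by metis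
  qed
  then obtain \<rho> T where \<rho>T: "\<And>x. x \<in> frontier E \<Longrightarrow>
      \<rho> x > 0 \<and> T x > 0 \<and> (\<forall>q\<in>frontier E. dist q x < \<rho> x \<longrightarrow> two_sided_balls E q (T x))"
    by metis
  show ?thesis
  proof (cases "frontier E = {}")
    case True
    then show ?thesis using that[of 1] by simp
  next
    case False
    have "compact (frontier E)" using bounded by (rule compact_frontier_bounded)
    moreover have "frontier E \<subseteq> (\<Union>x\<in>frontier E. ball x (\<rho> x))" using \<rho>T by force
    ultimately obtain F where F: "F \<subseteq> frontier E" "finite F" "frontier E \<subseteq> (\<Union>x\<in>F. ball x (\<rho> x))"
      using compactE_image[of "frontier E" "frontier E" "\<lambda>x. ball x (\<rho> x)"] by blast
    then have "F \<noteq> {}" using False by auto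
    define t where "t = Min (T ` F)"
    have "t > 0" using F \<open>F \<noteq> {}\<close> \<rho>T by (auto simp: t_def)
    moreover have "two_sided_balls E q t" if q: "q \<in> frontier E" for q
    proof -
      obtain x where "x \<in> F" "q \<in> ball x (\<rho> x)" using F q by blast
      then have "two_sided_balls E q (T x)" using \<rho>T F q by (auto simp: dist_commute)
      moreover have "t \<le> T x" using F \<open>x \<in> F\<close> by (simp add: t_def)
      ultimately show ?thesis
        using two_sided_balls_mono norm_outer_normal[OF reg q] \<open>t > 0\<close> by blast
    qed
    ultimately show ?thesis using that by blast
  qed
qed

lemma differentiable_transform_open:
  assumes "f differentiable (at z)" "open S" "z \<in> S" "\<And>w. w \<in> S \<Longrightarrow> f w = g w"
  shows "g differentiable (at z)"
proof -
  obtain D where "(f has_derivative D) (at z)" using assms(1) unfolding differentiable_def by blast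
  then have "(g has_derivative D) (at z)" using assms(2-4) by (rule has_derivative_transform_within_open)
  then show ?thesis by (rule differentiableI)
qed

lemma differentiable_signed_dist_iff_inside:
  assumes "open E" "z \<in> E"
  shows "signed_dist E differentiable (at z) \<longleftrightarrow> (\<lambda>y. infdist y (- E)) differentiable (at z)"
proof -
  have eq: "signed_dist E w = - infdist w (- E)" if "w \<in> E" for w
    using that by (simp add: signed_dist_def)
  show ?thesis
  proof
    assume "signed_dist E differentiable (at z)"
    from differentiable_minus[OF this] show "(\<lambda>y. infdist y (- E)) differentiable (at z)"
      by (rule differentiable_transform_open[OF _ assms]) (simp add: eq)
  next
    assume "(\<lambda>y. infdist y (- E)) differentiable (at z)"
    from differentiable_minus[OF this] show "signed_dist E differentiable (at z)"
      by (rule differentiable_transform_open[OF _ assms]) (simp add: eq)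
  qed
qed

lemma differentiable_signed_dist_iff_outside:
  assumes "z \<notin> closure E"
  shows "signed_dist E differentiable (at z) \<longleftrightarrow> (\<lambda>y. infdist y (closure E)) differentiable (at z)"
proof -
  have eq: "signed_dist E w = infdist w (closure E)" if "w \<in> - closure E" for w
  proof -
    have "w \<in> - E" using that closure_subset by blast
    then show ?thesis by (simp add: signed_dist_def infdist_closure)
  qed
  have "open (- closure E)" "z \<in> - closure E" using assms by auto
  then show ?thesis using eq differentiable_transform_open by metis
qed

lemma nearest_frontier_point_normal:
  assumes reg: "C2_regular E" and p: "p \<in> frontier E"
    and near: "\<And>q. q \<in> frontier E \<Longrightarrow> dist z p \<le> dist z q"
  shows "z - p = ((z - p) \<bullet> outer_normal E p) *\<^sub>R outer_normal E p"
proof -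
  have "((\<lambda>q. z - q) has_derivative (\<lambda>k. 0 - k)) (at p within frontier E)"
    by (intro has_derivative_diff has_derivative_const has_derivative_ident)
  from has_derivative_minus[OF has_derivative_inner[OF this this]]
  have deriv: "((\<lambda>q. - ((z - q) \<bullet> (z - q))) has_derivative (\<lambda>k. (2 *\<^sub>R (z - p)) \<bullet> k))
      (at p within frontier E)"
    by (rule has_derivative_eq_rhs) (simp add: fun_eq_iff inner_commute)
  have "\<forall>q\<in>frontier E. dist q p < 1 \<longrightarrow> - ((z - q) \<bullet> (z - q)) \<le> - ((z - p) \<bullet> (z - p))"
    using near by (simp add: dot_square_norm dist_norm power_mono)
  then have "tan_proj E p (2 *\<^sub>R (z - p)) = 0"
    by (intro tan_proj_eq_0_at_frontier_extremum[OF reg p deriv zero_less_one] disjI1)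
  then have "tan_proj E p (z - p) = 0" by (simp add: linear_scale[OF linear_tan_proj])
  then show ?thesis by (simp add: tan_proj_def)
qed

lemma infdist_differentiable_near_frontier:
  fixes E C :: "'a::euclidean_space set"
  assumes reg: "C2_regular E" and "frontier E \<noteq> {}"
    and C: "closed C" "z \<notin> C" "frontier E \<subseteq> C" "frontier C \<subseteq> frontier E"
    and \<sigma>: "\<bar>\<sigma>\<bar> = 1"
    and sides: "\<And>q. q \<in> frontier E \<Longrightarrow> ball (q + t *\<^sub>R (\<sigma> *\<^sub>R outer_normal E q)) t \<inter> C = {}
        \<and> ball (q - t *\<^sub>R (\<sigma> *\<^sub>R outer_normal E q)) t \<subseteq> C"
    and z: "infdist z (frontier E) < t"
  shows "(\<lambda>y. infdist y C) differentiable (at z)"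
proof -
  have "C \<noteq> {}" using C(3) \<open>frontier E \<noteq> {}\<close> by blast
  then obtain p where "p \<in> C" and p_near: "infdist z C = dist z p"
    using infdist_attains_inf[OF C(1)] by blast
  then have "p \<in> frontier E" using nearest_point_in_frontier[OF C(2)] C(4) by auto
  define n where "n = outer_normal E p"
  define \<mu> where "\<mu> = (z - p) \<bullet> n"
  have near: "dist z p \<le> dist z q" if "q \<in> frontier E" for q
    using infdist_le[of q C z] C(3) that p_near by auto
  have zp: "z - p = \<mu> *\<^sub>R n"
    using nearest_frontier_point_normal[OF reg \<open>p \<in> frontier E\<close> near] by (simp add: \<mu>_def n_def)
  have "norm n = 1" using norm_outer_normal[OF reg \<open>p \<in> frontier E\<close>] by (simp add: n_def)
  then have "\<bar>\<mu>\<bar> = infdist z C" using zp p_near by (simp add: dist_norm)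
  also have "\<dots> \<le> infdist z (frontier E)" by (rule infdist_mono[OF C(3) \<open>frontier E \<noteq> {}\<close>])
  finally have "\<bar>\<sigma> * \<mu>\<bar> < t" using z \<sigma> by (simp add: abs_mult)
  have "\<sigma> * \<sigma> = 1" using \<sigma> abs_mult_self_eq[of \<sigma>] by simp
  then have "z - p = (\<sigma> * \<mu>) *\<^sub>R (\<sigma> *\<^sub>R n)" using zp by (simp add: mult.commute mult.left_commute)
  moreover have "norm (\<sigma> *\<^sub>R n) = 1" using \<sigma> \<open>norm n = 1\<close> by simp
  ultimately have "((\<lambda>y. infdist y C) has_derivative (\<lambda>k. (\<sigma> *\<^sub>R n) \<bullet> k)) (at z)"
    using \<open>\<bar>\<sigma> * \<mu>\<bar> < t\<close> sides[OF \<open>p \<in> frontier E\<close>, folded n_def]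
    by (intro infdist_has_derivative_two_balls[OF \<open>p \<in> C\<close> C(2)]) auto
  then show ?thesis by (rule differentiableI)
qed

lemma signed_dist_differentiable_near_frontier:
  fixes E :: "'a::euclidean_space set"
  assumes bounded: "bounded E" and reg: "C2_regular E" and ne: "frontier E \<noteq> {}"
  obtains r where "r > 0" "\<And>z. infdist z (frontier E) < r \<Longrightarrow> signed_dist E differentiable (at z)"
proof -
  obtain t where "t > 0" and balls: "\<And>q. q \<in> frontier E \<Longrightarrow> two_sided_balls E q t"
    using uniform_two_sided_balls[OF bounded reg] by blast
  have "open E" by (rule open_if_C2_regular[OF reg])
  then have frontier_E: "frontier E = closure E - E" by (simp add: frontier_def interior_open)
  have "signed_dist E differentiable (at z)" if z: "infdist z (frontier E) < t" for z
  proof -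
    consider "z \<in> frontier E" | "z \<in> E" | "z \<notin> closure E" using frontier_E by blast
    then show ?thesis
    proof cases
      case 1
      have n: "norm (outer_normal E z) = 1" by (rule norm_outer_normal[OF reg 1])
      have b: "ball (z - t *\<^sub>R outer_normal E z) t \<subseteq> E"
        "ball (z + t *\<^sub>R outer_normal E z) t \<inter> closure E = {}"
        using balls[OF 1] by (simp_all add: two_sided_balls_def)
      then have "ball (z + t *\<^sub>R outer_normal E z) t \<inter> E = {}" using closure_subset by blast
      with n \<open>t > 0\<close> b(1) have "(signed_dist E has_derivative (\<lambda>k. outer_normal E z \<bullet> k)) (at z)"
        by (rule signed_dist_has_derivative_two_balls)
      then show ?thesis by (rule differentiableI)
    next
      case 2
      have "(\<lambda>y. infdist y (- E)) differentiable (at z)"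
      proof (rule infdist_differentiable_near_frontier[OF reg ne, where \<sigma>="- 1" and t=t])
        show "closed (- E)" using \<open>open E\<close> by (rule closed_Compl)
        show "z \<notin> - E" using 2 by simp
        show "frontier E \<subseteq> - E" using frontier_E by blast
        show "frontier (- E) \<subseteq> frontier E" by simp
        show "\<bar>- 1 :: real\<bar> = 1" by simp
        show "infdist z (frontier E) < t" by (rule z)
        fix q assume "q \<in> frontier E"
        then have "ball (q - t *\<^sub>R outer_normal E q) t \<subseteq> E"
          "ball (q + t *\<^sub>R outer_normal E q) t \<inter> closure E = {}"
          using balls by (simp_all add: two_sided_balls_def)
        then show "ball (q + t *\<^sub>R (- 1 *\<^sub>R outer_normal E q)) t \<inter> - E = {}
            \<and> ball (q - t *\<^sub>R (- 1 *\<^sub>R outer_normal E q)) t \<subseteq> - E"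
          using closure_subset by auto
      qed
      then show ?thesis using differentiable_signed_dist_iff_inside[OF \<open>open E\<close> 2] by simp
    next
      case 3
      have "(\<lambda>y. infdist y (closure E)) differentiable (at z)"
      proof (rule infdist_differentiable_near_frontier[OF reg ne, where \<sigma>=1 and t=t])
        show "closed (closure E)" by simp
        show "z \<notin> closure E" by (rule 3)
        show "frontier E \<subseteq> closure E" using frontier_E by blast
        show "frontier (closure E) \<subseteq> frontier E"
          using interior_mono[OF closure_subset[of E]] by (auto simp: frontier_def)
        show "\<bar>1 :: real\<bar> = 1" by simp
        show "infdist z (frontier E) < t" by (rule z)
        fix q assume "q \<in> frontier E"
        then have "ball (q - t *\<^sub>R outer_normal E q) t \<subseteq> E"
          "ball (q + t *\<^sub>R outer_normal E q) t \<inter> closure E = {}"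
          using balls by (simp_all add: two_sided_balls_def)
        then show "ball (q + t *\<^sub>R (1 *\<^sub>R outer_normal E q)) t \<inter> closure E = {}
            \<and> ball (q - t *\<^sub>R (1 *\<^sub>R outer_normal E q)) t \<subseteq> closure E"
          using closure_subset by auto
      qed
      then show ?thesis using differentiable_signed_dist_iff_outside[OF 3] by simp
    qed
  qed
  then show ?thesis using that \<open>t > 0\<close> by blast
qed

lemma r_E_witness:
  fixes E :: "'a::euclidean_space set"
  assumes "bounded E" "C2_regular E" "frontier E \<noteq> {}" and "a < r_E E"
  obtains r where "a < r" "\<And>z. infdist z (frontier E) < r \<Longrightarrow> signed_dist E differentiable (at z)"
proof -
  define R where "R = {r. r > 0 \<and> (\<forall>z. infdist z (frontier E) < r \<longrightarrow> signed_dist E differentiable (at z))}"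
  obtain r0 where "r0 > 0" "\<And>z. infdist z (frontier E) < r0 \<Longrightarrow> signed_dist E differentiable (at z)"
    using signed_dist_differentiable_near_frontier[OF assms(1-3)] by blast
  then have "R \<noteq> {}" unfolding R_def by blast
  have "\<exists>r\<in>R. a < r"
  proof (cases "bdd_above R")
    case True
    have "a < Sup R" using assms(4) by (simp add: r_E_def R_def)
    then show ?thesis using less_cSup_iff[OF \<open>R \<noteq> {}\<close> True] by blast
  next
    case False
    then show ?thesis unfolding bdd_above_def by (meson not_le)
  qed
  then show ?thesis using that unfolding R_def by blast
qed

lemma frontier_not_on_normal_line:
  fixes E :: "'a::euclidean_space set"
  assumes bounded: "bounded E" and reg: "C2_regular E" and x: "x \<in> frontier E"
    and \<sigma>: "\<bar>\<sigma>\<bar> = 1" and l: "0 < l" "l < r_E E"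
  shows "x + l *\<^sub>R (\<sigma> *\<^sub>R outer_normal E x) \<notin> frontier E"
proof -
  define n where "n = outer_normal E x"
  have "norm n = 1" "norm (- n) = 1" using norm_outer_normal[OF reg x] by (simp_all add: n_def)
  have "frontier E \<noteq> {}" using x by blast
  obtain r where "l < r" and diff: "\<And>z. infdist z (frontier E) < r \<Longrightarrow> signed_dist E differentiable (at z)"
    using r_E_witness[OF bounded reg \<open>frontier E \<noteq> {}\<close> l(2)] by blast
  have diff_near: "signed_dist E differentiable (at w)" if "dist w x < r" for w
    using infdist_le[OF x, of w] that by (intro diff) linarith
  obtain t where "t > 0" and "\<And>q. q \<in> frontier E \<Longrightarrow> two_sided_balls E q t"
    using uniform_two_sided_balls[OF bounded reg] by blast
  then have balls: "ball (x - t *\<^sub>R n) t \<subseteq> E" "ball (x + t *\<^sub>R n) t \<inter> closure E = {}"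
    using x by (simp_all add: two_sided_balls_def n_def)
  have "open E" by (rule open_if_C2_regular[OF reg])
  then have frontier_E: "frontier E = closure E - E" by (simp add: frontier_def interior_open)
  have "\<sigma> = 1 \<or> \<sigma> = - 1" using \<sigma> by linarith
  then show ?thesis
  proof
    assume "\<sigma> = 1"
    have "x + l *\<^sub>R n \<notin> closure E"
    proof (rule exterior_ray_avoids_closed_set[OF closed_closure _ \<open>norm n = 1\<close> l(1) \<open>l < r\<close> \<open>t > 0\<close> balls(2)])
      show "x \<in> closure E" using x frontier_E by blast
      fix w assume "w \<notin> closure E" "dist w x < r"
      then show "(\<lambda>y. infdist y (closure E)) differentiable (at w)"
        using diff_near[of w] differentiable_signed_dist_iff_outside[of w E] by simp
    qed
    then show ?thesis using \<open>\<sigma> = 1\<close> frontier_E by (simp add: n_def)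
  next
    assume "\<sigma> = - 1"
    have "x + l *\<^sub>R (- n) \<notin> - E"
    proof (rule exterior_ray_avoids_closed_set[OF _ _ \<open>norm (- n) = 1\<close> l(1) \<open>l < r\<close> \<open>t > 0\<close>])
      show "closed (- E)" using \<open>open E\<close> by (rule closed_Compl)
      show "x \<in> - E" using x frontier_E by blast
      show "ball (x + t *\<^sub>R - n) t \<inter> - E = {}" using balls(1) by auto
      fix w assume "w \<notin> - E" "dist w x < r"
      then show "(\<lambda>y. infdist y (- E)) differentiable (at w)"
        using diff_near[of w] differentiable_signed_dist_iff_inside[OF \<open>open E\<close>, of w] by simp
    qed
    then show ?thesis using \<open>\<sigma> = - 1\<close> frontier_E by (simp add: n_def)
  qed
qed

lemma local_extremum_onD:
  assumes "local_max_on F A x y \<or> local_min_on F A x y"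
  obtains r where "r > 0" "x \<in> A" "y \<in> A"
    "(\<forall>q\<in>A. dist q x < r \<longrightarrow> F q y \<le> F x y) \<or> (\<forall>q\<in>A. dist q x < r \<longrightarrow> F x y \<le> F q y)"
    "(\<forall>q\<in>A. dist q y < r \<longrightarrow> F x q \<le> F x y) \<or> (\<forall>q\<in>A. dist q y < r \<longrightarrow> F x y \<le> F x q)"
proof -
  obtain r where "r > 0" "x \<in> A" "y \<in> A"
    and ext: "(\<forall>x'\<in>A. \<forall>y'\<in>A. dist x' x < r \<and> dist y' y < r \<longrightarrow> F x' y' \<le> F x y)
      \<or> (\<forall>x'\<in>A. \<forall>y'\<in>A. dist x' x < r \<and> dist y' y < r \<longrightarrow> F x y \<le> F x' y')"
    using assms unfolding local_max_on_def local_min_on_def by blast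
  from ext show ?thesis
  proof
    assume "\<forall>x'\<in>A. \<forall>y'\<in>A. dist x' x < r \<and> dist y' y < r \<longrightarrow> F x' y' \<le> F x y"
    then show ?thesis using that[OF \<open>r > 0\<close> \<open>x \<in> A\<close> \<open>y \<in> A\<close>] \<open>r > 0\<close> \<open>x \<in> A\<close> \<open>y \<in> A\<close> by simp
  next
    assume "\<forall>x'\<in>A. \<forall>y'\<in>A. dist x' x < r \<and> dist y' y < r \<longrightarrow> F x y \<le> F x' y'"
    then show ?thesis using that[OF \<open>r > 0\<close> \<open>x \<in> A\<close> \<open>y \<in> A\<close>] \<open>r > 0\<close> \<open>x \<in> A\<close> \<open>y \<in> A\<close> by simp
  qed
qed

lemma S_fun_le_iff:
  assumes "\<epsilon> > 0"
  shows "S_fun E \<epsilon> x y \<le> s \<longleftrightarrow> (x - y) \<bullet> outer_normal E x - s * ((x - y) \<bullet> (x - y) + \<epsilon>) \<le> 0"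
  using assms by (simp add: S_fun_def dot_square_norm add_nonneg_pos pos_divide_le_eq)

lemma S_fun_ge_iff:
  assumes "\<epsilon> > 0"
  shows "s \<le> S_fun E \<epsilon> x y \<longleftrightarrow> 0 \<le> (x - y) \<bullet> outer_normal E x - s * ((x - y) \<bullet> (x - y) + \<epsilon>)"
  using assms by (simp add: S_fun_def dot_square_norm add_nonneg_pos pos_le_divide_eq)

lemma S_fun_eq:
  assumes "\<epsilon> > 0"
  shows "(x - y) \<bullet> outer_normal E x = S_fun E \<epsilon> x y * ((x - y) \<bullet> (x - y) + \<epsilon>)"
proof -
  have "(x - y) \<bullet> (x - y) + \<epsilon> > 0" using assms by (simp add: add_nonneg_pos)
  then show ?thesis by (simp add: S_fun_def dot_square_norm)
qed

lemma S_fun_extremum_tan_proj: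
  fixes E :: "'a::euclidean_space set"
  assumes reg: "C2_regular E" and \<epsilon>: "\<epsilon> > 0"
    and opt: "local_max_on (S_fun E \<epsilon>) (frontier E) x y \<or> local_min_on (S_fun E \<epsilon>) (frontier E) x y"
  shows "tan_proj E y (outer_normal E x) = (2 * S_fun E \<epsilon> x y) *\<^sub>R tan_proj E y (x - y)"
proof -
  obtain r where "r > 0" and y: "y \<in> frontier E" and ext:
    "(\<forall>q\<in>frontier E. dist q y < r \<longrightarrow> S_fun E \<epsilon> x q \<le> S_fun E \<epsilon> x y)
      \<or> (\<forall>q\<in>frontier E. dist q y < r \<longrightarrow> S_fun E \<epsilon> x y \<le> S_fun E \<epsilon> x q)"
    using local_extremum_onD[OF opt] by metis
  define s where "s = S_fun E \<epsilon> x y"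
  define n where "n = outer_normal E x"
  define f where "f z = (x - z) \<bullet> n - s * ((x - z) \<bullet> (x - z) + \<epsilon>)" for z
  have "f y = 0" using S_fun_eq[OF \<epsilon>, of x y E] by (simp add: f_def s_def n_def)
  from ext have "(\<forall>q\<in>frontier E. dist q y < r \<longrightarrow> f q \<le> f y) \<or> (\<forall>q\<in>frontier E. dist q y < r \<longrightarrow> f y \<le> f q)"
    unfolding s_def[symmetric]
    by (simp only: \<open>f y = 0\<close>) (simp add: f_def n_def S_fun_le_iff[OF \<epsilon>] S_fun_ge_iff[OF \<epsilon>])
  moreover have "(f has_derivative (\<lambda>k. ((x - y) \<bullet> 0 + (0 - k) \<bullet> n)
      - s * (((x - y) \<bullet> (0 - k) + (0 - k) \<bullet> (x - y)) + 0))) (at y within frontier E)"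
    unfolding f_def
    by (intro has_derivative_diff has_derivative_mult_right has_derivative_add has_derivative_inner
        has_derivative_const has_derivative_ident)
  then have "(f has_derivative (\<lambda>k. ((2 * s) *\<^sub>R (x - y) - n) \<bullet> k)) (at y within frontier E)"
    by (rule has_derivative_eq_rhs) (simp add: fun_eq_iff inner_diff_left inner_commute algebra_simps)
  ultimately have "tan_proj E y ((2 * s) *\<^sub>R (x - y) - n) = 0"
    using tan_proj_eq_0_at_frontier_extremum[OF reg y _ \<open>r > 0\<close>] by blast
  then show ?thesis
    by (simp add: linear_diff[OF linear_tan_proj] linear_scale[OF linear_tan_proj] s_def n_def)
qed

lemma S_fun_extremum_second_fund:
  fixes E :: "'a::euclidean_space set"
  assumes reg: "C2_regular E" and \<epsilon>: "\<epsilon> > 0"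
    and opt: "local_max_on (S_fun E \<epsilon>) (frontier E) x y \<or> local_min_on (S_fun E \<epsilon>) (frontier E) x y"
  shows "second_fund E x (x - y) = (2 * S_fun E \<epsilon> x y) *\<^sub>R tan_proj E x (x - y)"
proof -
  obtain r where "r > 0" and x: "x \<in> frontier E" and ext:
    "(\<forall>q\<in>frontier E. dist q x < r \<longrightarrow> S_fun E \<epsilon> q y \<le> S_fun E \<epsilon> x y)
      \<or> (\<forall>q\<in>frontier E. dist q x < r \<longrightarrow> S_fun E \<epsilon> x y \<le> S_fun E \<epsilon> q y)"
    using local_extremum_onD[OF opt] by metis
  define s where "s = S_fun E \<epsilon> x y"
  define n where "n = outer_normal E x"
  define B where "B = second_fund E x"
  define f where "f z = (z - y) \<bullet> outer_normal E z - s * ((z - y) \<bullet> (z - y) + \<epsilon>)" for z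
  have "f x = 0" using S_fun_eq[OF \<epsilon>, of x y E] by (simp add: f_def s_def)
  from ext have extremum: "(\<forall>q\<in>frontier E. dist q x < r \<longrightarrow> f q \<le> f x) \<or> (\<forall>q\<in>frontier E. dist q x < r \<longrightarrow> f x \<le> f q)"
    unfolding s_def[symmetric]
    by (simp only: \<open>f x = 0\<close>) (simp add: f_def S_fun_le_iff[OF \<epsilon>] S_fun_ge_iff[OF \<epsilon>])
  have sym: "(x - y) \<bullet> B k = k \<bullet> B (x - y)" for k
    unfolding B_def by (rule second_fund_symmetric[OF reg x])
  have "(f has_derivative (\<lambda>k. ((x - y) \<bullet> B k + (k - 0) \<bullet> n)
      - s * (((x - y) \<bullet> (k - 0) + (k - 0) \<bullet> (x - y)) + 0))) (at x within frontier E)"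
    unfolding f_def n_def B_def
    by (intro has_derivative_diff has_derivative_mult_right has_derivative_add has_derivative_inner
        has_derivative_outer_normal[OF reg x] has_derivative_const has_derivative_ident)
  moreover have "k \<bullet> B (x - y) + (k - 0) \<bullet> n - s * ((x - y) \<bullet> (k - 0) + (k - 0) \<bullet> (x - y) + 0)
      = (B (x - y) + n - (2 * s) *\<^sub>R (x - y)) \<bullet> k" for k
  proof -
    have "(B (x - y) + n - (2 * s) *\<^sub>R (x - y)) \<bullet> k = B (x - y) \<bullet> k + n \<bullet> k - 2 * s * ((x - y) \<bullet> k)"
      by (simp add: inner_diff_left inner_add_left)
    moreover have "k \<bullet> B (x - y) = B (x - y) \<bullet> k" "k \<bullet> n = n \<bullet> k" "k \<bullet> (x - y) = (x - y) \<bullet> k"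
      by (simp_all add: inner_commute)
    ultimately show ?thesis by simp
  qed
  ultimately have "(f has_derivative (\<lambda>k. (B (x - y) + n - (2 * s) *\<^sub>R (x - y)) \<bullet> k)) (at x within frontier E)"
    unfolding sym by simp
  with extremum have zero: "tan_proj E x (B (x - y) + n - (2 * s) *\<^sub>R (x - y)) = 0"
    using tan_proj_eq_0_at_frontier_extremum[OF reg x _ \<open>r > 0\<close>] by blast
  have "tan_proj E x (B (x - y)) = B (x - y)"
  proof -
    have "B (x - y) \<bullet> n = 0"
      using outer_normal_inner_second_fund[OF reg x, of "x - y"] by (simp add: B_def n_def inner_commute)
    then show ?thesis by (simp add: tan_proj_def n_def[symmetric])
  qed
  moreover have "tan_proj E x n = 0"
    using norm_outer_normal[OF reg x] by (simp add: tan_proj_def n_def dot_square_norm)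
  moreover have "tan_proj E x (B (x - y) + n - (2 * s) *\<^sub>R (x - y))
      = tan_proj E x (B (x - y)) + tan_proj E x n - (2 * s) *\<^sub>R tan_proj E x (x - y)"
    by (simp only: linear_add[OF linear_tan_proj] linear_diff[OF linear_tan_proj]
        linear_scale[OF linear_tan_proj])
  ultimately have "B (x - y) = (2 * s) *\<^sub>R tan_proj E x (x - y)" using zero by simp
  then show ?thesis by (simp add: B_def s_def)
qed

lemma S_fun_extremum_normal:
  fixes E :: "'a::euclidean_space set"
  assumes bounded: "bounded E" and reg: "C2_regular E" and \<epsilon>: "\<epsilon> > 0"
    and opt: "local_max_on (S_fun E \<epsilon>) (frontier E) x y \<or> local_min_on (S_fun E \<epsilon>) (frontier E) x y"
    and r_E: "r_E E > sqrt \<epsilon>"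
  shows "outer_normal E y =
    (outer_normal E x - (2 * S_fun E \<epsilon> x y) *\<^sub>R (x - y)) /\<^sub>R
    ((outer_normal E x - (2 * S_fun E \<epsilon> x y) *\<^sub>R (x - y)) \<bullet> outer_normal E y)"
proof -
  have x: "x \<in> frontier E" and y: "y \<in> frontier E"
    using opt unfolding local_max_on_def local_min_on_def by auto
  define s where "s = S_fun E \<epsilon> x y"
  define n where "n = outer_normal E x"
  define w where "w = n - (2 * s) *\<^sub>R (x - y)"
  have "tan_proj E y w = 0"
    using S_fun_extremum_tan_proj[OF reg \<epsilon> opt]
    by (simp add: w_def s_def n_def linear_diff[OF linear_tan_proj] linear_scale[OF linear_tan_proj])
  then have w: "w = (w \<bullet> outer_normal E y) *\<^sub>R outer_normal E y" by (simp add: tan_proj_def)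
  have "w \<noteq> 0"
  proof
    assume "w = 0"
    then have n_eq: "n = (2 * s) *\<^sub>R (x - y)" by (simp add: w_def)
    have "norm n = 1" using norm_outer_normal[OF reg x] by (simp add: n_def)
    then have "s \<noteq> 0" "x \<noteq> y" using n_eq by auto
    define l where "l = norm (x - y)"
    have "(x - y) \<bullet> n = 2 * s * l\<^sup>2" using n_eq by (simp add: l_def dot_square_norm)
    moreover have "(x - y) \<bullet> n = s * (l\<^sup>2 + \<epsilon>)"
      using S_fun_eq[OF \<epsilon>, of x y E] by (simp add: l_def s_def n_def dot_square_norm)
    ultimately have "l\<^sup>2 = \<epsilon>" using \<open>s \<noteq> 0\<close> by (simp add: algebra_simps)
    then have "l = sqrt \<epsilon>" by (simp add: l_def real_sqrt_unique)
    have "2 * \<bar>s\<bar> * l = 1" using n_eq \<open>norm n = 1\<close> by (simp add: l_def abs_mult)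
    then have "sgn s * l = 1 / (2 * s)"
      using \<open>s \<noteq> 0\<close> by (cases "s > 0") (simp_all add: field_simps)
    moreover have "x - y = (1 / (2 * s)) *\<^sub>R n" using n_eq \<open>s \<noteq> 0\<close> by simp
    ultimately have "y = x + l *\<^sub>R ((- sgn s) *\<^sub>R n)" by (simp add: algebra_simps)
    moreover have "\<bar>- sgn s\<bar> = 1" using \<open>s \<noteq> 0\<close> by (simp add: abs_sgn_eq)
    moreover have "0 < l" using \<open>x \<noteq> y\<close> by (simp add: l_def)
    moreover have "l < r_E E" using r_E \<open>l = sqrt \<epsilon>\<close> by simp
    ultimately have "x + l *\<^sub>R ((- sgn s) *\<^sub>R n) \<notin> frontier E"
      unfolding n_def by (intro frontier_not_on_normal_line[OF bounded reg x])
    then show False using y \<open>y = x + l *\<^sub>R ((- sgn s) *\<^sub>R n)\<close> by simp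
  qed
  define c where "c = w \<bullet> outer_normal E y"
  have "c \<noteq> 0" using w \<open>w \<noteq> 0\<close> by (auto simp: c_def)
  then have "outer_normal E y = w /\<^sub>R c" using w by (simp add: c_def[symmetric])
  then show ?thesis by (simp add: c_def w_def n_def s_def)
qed

theorem lemma4p2:
  fixes E :: "'a::euclidean_space set" and \<epsilon> :: real and x y :: 'a
  assumes "DIM('a) \<ge> 2"
    and "bounded E" and "C2_regular E" and "\<epsilon> > 0"
    and "local_max_on (S_fun E \<epsilon>) (frontier E) x y \<or> local_min_on (S_fun E \<epsilon>) (frontier E) x y"
  shows "second_fund E x (x - y) = (2 * S_fun E \<epsilon> x y) *\<^sub>R tan_proj E x (x - y)
       \<and> tan_proj E y (outer_normal E x) = (2 * S_fun E \<epsilon> x y) *\<^sub>R tan_proj E y (x - y)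
       \<and> (r_E E > sqrt \<epsilon> \<longrightarrow>
         outer_normal E y =
           (outer_normal E x - (2 * S_fun E \<epsilon> x y) *\<^sub>R (x - y)) /\<^sub>R
           ((outer_normal E x - (2 * S_fun E \<epsilon> x y) *\<^sub>R (x - y)) \<bullet> outer_normal E y))"
  using S_fun_extremum_second_fund[OF assms(3-5)] S_fun_extremum_tan_proj[OF assms(3-5)]
    S_fun_extremum_normal[OF assms(2-5)] by blast

end
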